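(* Let $F$ be a $p$-adic field of characteristic zero with residue characteristic $p\neq2$ and residue field of cardinality $q$, and let $n\in\mathbb{N}$ be coprime to $(q-1)q(q+1)$. Let $K$ be either $\mathrm{GL}_2(\mathcal{O}_F)$ or the Iwahori subgroup $\{\begin{pmatrix}a&b\\c&d\end{pmatrix}\in\mathrm{GL}_2(\mathcal{O}_F):\mathrm{ord}(b)>0\}$. Then for every regular semisimple $\gamma\in K$, $$d^+(\gamma)=d^+(\gamma^n)\quad\text{and}\quad D_{\mathrm{GL}_2}(\gamma)=D_{\mathrm{GL}_2}(\gamma^n).$$
   Context: $D_{\mathrm{GL}_2}(\gamma)=|\det(1-\mathrm{Ad}(\gamma))_{\mathfrak{gl}_2(F)/\mathfrak{gl}_2(F)_\gamma}|$ is the Weyl discriminant, with $|x|=q^{-\mathrm{ord}(x)}$. For $x$ in the Bruhat–Tits building $\mathcal{B}(\mathrm{GL}_2,F)$, $\{(\mathrm{GL}_2)_{x,r}\}_{r\ge0}$ is the Moy–Prasad filtration. For a regular semisimple $\gamma$ lying in a maximal torus with compact image modulo the center $Z$, its depth is $d(\gamma)=\max(\{0\}\cup\{r\ge0:\gamma\in(\mathrm{GL}_2)_{x,r}\text{ for some }x\in\mathcal{B}(\mathrm{GL}_2,F)\})$, and the maximal depth is $d^+(\gamma)=\max\{d(z\gamma):z\in Z(F)\}$. *)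

theory Defs
  imports "HOL-Analysis.Analysis"
begin

text \<open>The normalized discrete valuation ord is given as a function v on nonzero
elements; val extends it by val 0 = infinity.\<close>

definition val :: "('a::field \<Rightarrow> int) \<Rightarrow> 'a \<Rightarrow> ereal" where
  "val v x = (if x = 0 then \<infinity> else ereal (real_of_int (v x)))"

definition ring_of_integers :: "('a::field \<Rightarrow> int) \<Rightarrow> 'a set" where
  "ring_of_integers v = {x. val v x \<ge> 0}"

definition residue_field :: "('a::field \<Rightarrow> int) \<Rightarrow> 'a set set" where
  "residue_field v = ring_of_integers v //
     {(x, y). x \<in> ring_of_integers v \<and> y \<in> ring_of_integers v \<and> val v (x - y) > 0}"

definition padic_field :: "('a::field \<Rightarrow> int) \<Rightarrow> nat \<Rightarrow> nat \<Rightarrow> bool" where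
  "padic_field v p q \<longleftrightarrow>
     CHAR('a) = 0 \<and>
     (\<forall>x y. x \<noteq> 0 \<longrightarrow> y \<noteq> 0 \<longrightarrow> v (x * y) = v x + v y) \<and>
     (\<forall>x y. x \<noteq> 0 \<longrightarrow> y \<noteq> 0 \<longrightarrow> x + y \<noteq> 0 \<longrightarrow> v (x + y) \<ge> min (v x) (v y)) \<and>
     (\<exists>\<pi>::'a. \<pi> \<noteq> 0 \<and> v \<pi> = 1) \<and>
     (\<forall>X::nat \<Rightarrow> 'a.
        (\<forall>N::int. \<exists>M. \<forall>m\<ge>M. \<forall>n\<ge>M. ereal (real_of_int N) \<le> val v (X m - X n)) \<longrightarrow>
        (\<exists>L. \<forall>N::int. \<exists>M. \<forall>m\<ge>M. ereal (real_of_int N) \<le> val v (X m - L))) \<and>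
     prime p \<and> val v (of_nat p) > 0 \<and>
     finite (residue_field v) \<and> card (residue_field v) = q"

definition absv :: "('a::field \<Rightarrow> int) \<Rightarrow> nat \<Rightarrow> 'a \<Rightarrow> real" where
  "absv v q x = (if x = 0 then 0 else real q powr (- real_of_int (v x)))"

definition mtrace :: "'a::comm_ring_1^2^2 \<Rightarrow> 'a" where
  "mtrace g = g $ 1 $ 1 + g $ 2 $ 2"

definition mpow :: "'a::comm_ring_1^2^2 \<Rightarrow> nat \<Rightarrow> 'a^2^2" where
  "mpow g n = ((\<lambda>A. A ** g) ^^ n) (mat 1)"

definition GL2_O :: "('a::field \<Rightarrow> int) \<Rightarrow> ('a^2^2) set" where
  "GL2_O v = {g. (\<forall>i j. g $ i $ j \<in> ring_of_integers v) \<and> det g \<noteq> 0 \<and> val v (det g) = 0}"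

definition Iwahori :: "('a::field \<Rightarrow> int) \<Rightarrow> ('a^2^2) set" where
  "Iwahori v = {g \<in> GL2_O v. val v (g $ 1 $ 2) > 0}"

text \<open>Regular semisimple elements of GL_2(F): invertible with distinct eigenvalues
(in an algebraic closure), i.e. nonzero discriminant of the characteristic polynomial.\<close>
definition regular_semisimple :: "'a::field^2^2 \<Rightarrow> bool" where
  "regular_semisimple g \<longleftrightarrow> det g \<noteq> 0 \<and> (mtrace g)^2 - 4 * det g \<noteq> 0"

text \<open>Weyl discriminant: for eigenvalues l1, l2,
 |det(1 - Ad g) on gl2/gl2_g| = |(1 - l1/l2)(1 - l2/l1)| = |(tr^2 - 4 det)/det|.\<close>
definition weyl_disc :: "('a::field \<Rightarrow> int) \<Rightarrow> nat \<Rightarrow> 'a^2^2 \<Rightarrow> real" where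
  "weyl_disc v q g = absv v q (((mtrace g)^2 - 4 * det g) / det g)"

text \<open>Points of the (extended) Bruhat--Tits building of GL_2(F) are the splittable norms on F^2
(Goldman--Iwahori / Bruhat--Tits): given a basis (columns of B, det B nonzero) and reals a1, a2,
the norm of w = B x is min(val x1 + a1, val x2 + a2).\<close>
definition bnorm :: "('a::field \<Rightarrow> int) \<Rightarrow> real \<Rightarrow> real \<Rightarrow> 'a^2 \<Rightarrow> ereal" where
  "bnorm v a1 a2 x = min (val v (x $ 1) + ereal a1) (val v (x $ 2) + ereal a2)"

definition MP_filt :: "('a::field \<Rightarrow> int) \<Rightarrow> 'a^2^2 \<Rightarrow> real \<Rightarrow> real \<Rightarrow> real \<Rightarrow> ('a^2^2) set" where
  "MP_filt v B a1 a2 r = {g. det g \<noteq> 0 \<and>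
     (\<forall>x y. g *v (B *v x) = B *v y \<longrightarrow> bnorm v a1 a2 y = bnorm v a1 a2 x) \<and>
     (\<forall>x y. (g - mat 1) *v (B *v x) = B *v y \<longrightarrow> bnorm v a1 a2 y \<ge> bnorm v a1 a2 x + ereal r)}"

definition depth :: "('a::field \<Rightarrow> int) \<Rightarrow> 'a^2^2 \<Rightarrow> real" where
  "depth v g = Sup (insert 0 {r. r \<ge> 0 \<and>
      (\<exists>B a1 a2. det B \<noteq> 0 \<and> g \<in> MP_filt v B a1 a2 r)})"

definition max_depth :: "('a::field \<Rightarrow> int) \<Rightarrow> 'a^2^2 \<Rightarrow> real" where
  "max_depth v g = Sup {depth v (mat z ** g) | z. z \<noteq> 0}"

end

(* Write s = tr g and d = det g. By Cayley--Hamilton the powers of g are governed by the Lucas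
   sequence of X^2 - s X + d: g^n = U_n g - d U_(n-1), so det (g^n) = d^n and
   disc (g^n) = U_n^2 disc g. For g in GL_2(O) and p <> 2 both the maximal depth and the Weyl
   discriminant depend only on ord (disc g): the maximal depth is ord (disc g) / 2 (if z g lies in
   G_(x,r), the Moy--Prasad lattice estimates give 2 r <= ord (disc g); after scaling g to trace 2,
   an explicit point x of the building attains this), and D(g) = |disc g / det g|. Hence it
   suffices that U_n is a unit, which is decided modulo the maximal ideal according to how
   X^2 - s X + d factors over the residue field F_q. For a double root l, U_n = n l^(n-1) with
   n a unit as gcd (n, q) = 1; for distinct roots r, r' in F_q, U_n = 0 would force r^n = r'^n, but
   x -> x^n is injective on F_q^* as gcd (n, q - 1) = 1; for an irreducible polynomial the same
   argument runs in F_(q^2)^*, using gcd (n, q^2 - 1) = 1. *)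

theory Submission
  imports Defs
begin

section \<open>Discrete valuations and congruences modulo the maximal ideal\<close>

locale discrete_valuation =
  fixes v :: "'a::field \<Rightarrow> int"
  assumes v_mult: "x \<noteq> 0 \<Longrightarrow> y \<noteq> 0 \<Longrightarrow> v (x * y) = v x + v y"
    and v_add: "x \<noteq> 0 \<Longrightarrow> y \<noteq> 0 \<Longrightarrow> x + y \<noteq> 0 \<Longrightarrow> min (v x) (v y) \<le> v (x + y)"
begin

abbreviation integers ("\<O>") where "\<O> \<equiv> ring_of_integers v"

abbreviation cong_m (infix "\<equiv>\<^sub>m" 50) where "x \<equiv>\<^sub>m y \<equiv> 0 < val v (x - y)"

lemma v_one: "v 1 = 0"
  using v_mult[of 1 1] by simp

lemma val_mult: "val v (x * y) = val v x + val v y"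
  by (simp add: val_def v_mult)

lemma val_add: "min (val v x) (val v y) \<le> val v (x + y)"
  using v_add[of x y] by (auto simp: val_def min_def)

lemma val_zero [simp]: "val v 0 = \<infinity>"
  by (simp add: val_def)

lemma val_neq_minus_infinity [simp]: "val v x \<noteq> -\<infinity>"
  by (simp add: val_def)

lemma val_one [simp]: "val v 1 = 0"
  by (simp add: val_def v_one)

lemma val_minus [simp]: "val v (- x) = val v x"
proof -
  have "v (-1) = 0"
    using v_mult[of "-1" "-1"] v_one by simp
  then show ?thesis
    using v_mult[of "-1" x] by (simp add: val_def)
qed

lemma v_minus [simp]: "v (- x) = v x"
  using val_minus[of x] by (cases "x = 0") (simp_all add: val_def)

lemma val_diff_commute: "val v (x - y) = val v (y - x)"
  by (metis minus_diff_eq val_minus)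

lemma val_inverse: "x \<noteq> 0 \<Longrightarrow> val v (inverse x) = - val v x"
  using v_mult[of x "inverse x"] v_one by (simp add: val_def)

lemma v_power: "x \<noteq> 0 \<Longrightarrow> v (x ^ k) = int k * v x"
  by (induction k) (auto simp: v_mult v_one algebra_simps)

lemma val_power_unit: "val v x = 0 \<Longrightarrow> val v (x ^ k) = 0"
  by (induction k) (simp_all add: val_mult)

lemma val_add_ge: "C \<le> val v x \<Longrightarrow> C \<le> val v y \<Longrightarrow> C \<le> val v (x + y)"
  using val_add[of x y] by (auto simp: min_def split: if_splits)

lemma val_diff_ge: "C \<le> val v x \<Longrightarrow> C \<le> val v y \<Longrightarrow> C \<le> val v (x - y)"
  using val_add_ge[of C x "- y"] by simp

lemma val_add_strict: "val v x < val v y \<Longrightarrow> val v (x + y) = val v x"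
proof -
  assume less: "val v x < val v y"
  have "min (val v (x + y)) (val v y) \<le> val v x"
    using val_add[of "x + y" "- y"] by simp
  then show ?thesis
    using less val_add[of x y] by (auto simp: min_def split: if_splits)
qed

lemma integers_iff: "x \<in> \<O> \<longleftrightarrow> 0 \<le> val v x"
  by (simp add: ring_of_integers_def)

lemma integers_0 [simp]: "0 \<in> \<O>" and integers_1 [simp]: "1 \<in> \<O>"
  by (auto simp: integers_iff)

lemma integers_mult [intro]: "x \<in> \<O> \<Longrightarrow> y \<in> \<O> \<Longrightarrow> x * y \<in> \<O>"
  by (simp add: integers_iff val_mult)

lemma integers_add [intro]: "x \<in> \<O> \<Longrightarrow> y \<in> \<O> \<Longrightarrow> x + y \<in> \<O>"
  by (simp add: integers_iff val_add_ge)

lemma integers_minus [intro]: "x \<in> \<O> \<Longrightarrow> - x \<in> \<O>"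
  by (simp add: integers_iff)

lemma integers_diff [intro]: "x \<in> \<O> \<Longrightarrow> y \<in> \<O> \<Longrightarrow> x - y \<in> \<O>"
  by (simp add: integers_iff val_diff_ge)

lemma integers_power [intro]: "x \<in> \<O> \<Longrightarrow> x ^ k \<in> \<O>"
  by (induction k) auto

lemma integers_of_nat [simp]: "of_nat k \<in> \<O>"
  by (induction k) auto

lemma integers_of_int [simp]: "of_int k \<in> \<O>"
  by (cases k rule: int_cases) (auto simp del: of_nat_Suc)

lemma integers_numeral [simp]: "numeral k \<in> \<O>"
  using integers_of_nat[of "numeral k"] by simp

lemma integers_prod [intro]: "(\<And>i. i \<in> A \<Longrightarrow> f i \<in> \<O>) \<Longrightarrow> prod f A \<in> \<O>"
  by (induction A rule: infinite_finite_induct) auto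

lemma val_prod_unit: "(\<And>i. i \<in> A \<Longrightarrow> val v (f i) = 0) \<Longrightarrow> val v (prod f A) = 0"
  by (induction A rule: infinite_finite_induct) (auto simp: val_mult)

lemma val_mult_unit_iff:
  assumes "x \<in> \<O>" "y \<in> \<O>"
  shows "val v (x * y) = 0 \<longleftrightarrow> val v x = 0 \<and> val v y = 0"
  using assms by (auto simp: integers_iff val_mult add_nonneg_eq_0_iff)

lemma val_mult_pos: "x \<in> \<O> \<Longrightarrow> 0 < val v y \<Longrightarrow> 0 < val v (x * y)"
  by (simp add: integers_iff val_mult add_nonneg_pos)

lemma val_divide_unit: "val v y = 0 \<Longrightarrow> val v (x / y) = val v x"
  by (cases "y = 0") (simp_all add: divide_inverse val_mult val_inverse)

lemma cong_m_refl [simp]: "x \<equiv>\<^sub>m x"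
  by simp

lemma cong_m_sym: "x \<equiv>\<^sub>m y \<Longrightarrow> y \<equiv>\<^sub>m x"
  by (simp add: val_diff_commute)

lemma cong_m_trans [trans]: "x \<equiv>\<^sub>m y \<Longrightarrow> y \<equiv>\<^sub>m z \<Longrightarrow> x \<equiv>\<^sub>m z"
  using val_add_ge[of 0 "x - y" "y - z"] val_add[of "x - y" "y - z"]
  by (auto simp: min_def split: if_splits)

lemma cong_m_add: "a \<equiv>\<^sub>m b \<Longrightarrow> c \<equiv>\<^sub>m d \<Longrightarrow> a + c \<equiv>\<^sub>m b + d"
  using val_add[of "a - b" "c - d"] by (auto simp: min_def algebra_simps split: if_splits)

lemma cong_m_minus: "a \<equiv>\<^sub>m b \<Longrightarrow> - a \<equiv>\<^sub>m - b"
  by (metis minus_diff_minus val_minus)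

lemma cong_m_diff: "a \<equiv>\<^sub>m b \<Longrightarrow> c \<equiv>\<^sub>m d \<Longrightarrow> a - c \<equiv>\<^sub>m b - d"
  using cong_m_add[OF _ cong_m_minus, of a b c d] by simp

lemma cong_m_mult_left: "c \<in> \<O> \<Longrightarrow> a \<equiv>\<^sub>m b \<Longrightarrow> c * a \<equiv>\<^sub>m c * b"
  using val_mult_pos[of c "a - b"] by (simp add: algebra_simps)

lemma cong_m_mult: "a \<in> \<O> \<Longrightarrow> d \<in> \<O> \<Longrightarrow> a \<equiv>\<^sub>m b \<Longrightarrow> c \<equiv>\<^sub>m d \<Longrightarrow> a * c \<equiv>\<^sub>m b * d"
  by (metis cong_m_mult_left cong_m_trans mult.commute)

lemma cong_m_power: "a \<in> \<O> \<Longrightarrow> b \<in> \<O> \<Longrightarrow> a \<equiv>\<^sub>m b \<Longrightarrow> a ^ k \<equiv>\<^sub>m b ^ k"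
  by (induction k) (auto intro: cong_m_mult)

lemma cong_m_sum: "(\<And>i. i \<in> A \<Longrightarrow> f i \<equiv>\<^sub>m g i) \<Longrightarrow> sum f A \<equiv>\<^sub>m sum g A"
  by (induction A rule: infinite_finite_induct) (auto intro: cong_m_add)

lemma cong_m_prod:
  "(\<And>i. i \<in> A \<Longrightarrow> f i \<equiv>\<^sub>m g i) \<Longrightarrow> (\<And>i. i \<in> A \<Longrightarrow> f i \<in> \<O>) \<Longrightarrow> (\<And>i. i \<in> A \<Longrightarrow> g i \<in> \<O>)
   \<Longrightarrow> prod f A \<equiv>\<^sub>m prod g A"
  by (induction A rule: infinite_finite_induct) (auto intro!: cong_m_mult)

lemma cong_m_mult_cancel: "val v c = 0 \<Longrightarrow> c * a \<equiv>\<^sub>m c * b \<Longrightarrow> a \<equiv>\<^sub>m b"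
  using val_mult[of c "a - b"] by (simp add: right_diff_distrib)

lemma unit_cong_m: "val v x = 0 \<Longrightarrow> x \<equiv>\<^sub>m y \<Longrightarrow> val v y = 0"
  using val_add_strict[of x "y - x"] by (simp add: val_diff_commute)

lemma unit_iff_not_cong_m_0: "x \<in> \<O> \<Longrightarrow> val v x = 0 \<longleftrightarrow> \<not> x \<equiv>\<^sub>m 0"
  by (auto simp: integers_iff)


lemma val_of_nat_coprime:
  assumes "coprime a b" and "0 < val v (of_nat b :: 'a)"
  shows "val v (of_nat a :: 'a) = 0"
proof (rule ccontr)
  assume "val v (of_nat a :: 'a) \<noteq> 0"
  then have a: "of_nat a \<equiv>\<^sub>m (0::'a)"
    using unit_iff_not_cong_m_0[of "of_nat a"] by simp
  obtain x y where "x * int a + y * int b = 1"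
    using bezout_int[of "int a" "int b"] \<open>coprime a b\<close>
    by (auto simp: coprime_iff_gcd_eq_1 gcd_int_def)
  then have "of_int x * of_nat a + of_int y * of_nat b = (1::'a)"
    by (metis of_int_1 of_int_add of_int_mult of_int_of_nat_eq)
  moreover have "of_int x * of_nat a + of_int y * of_nat b \<equiv>\<^sub>m of_int x * 0 + of_int y * (0::'a)"
    using assms(2) by (intro cong_m_add cong_m_mult_left a) simp_all
  ultimately show False
    by simp
qed

end

section \<open>Representatives of the residue field\<close>

locale residue_system = discrete_valuation +
  fixes R :: "'a set"
  assumes finite_R: "finite R"
    and R_integers: "R \<subseteq> \<O>"
    and R_complete: "x \<in> \<O> \<Longrightarrow> \<exists>!r. r \<in> R \<and> r \<equiv>\<^sub>m x"
begin

definition red :: "'a \<Rightarrow> 'a" where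
  "red x = (THE r. r \<in> R \<and> r \<equiv>\<^sub>m x)"

lemma red: "x \<in> \<O> \<Longrightarrow> red x \<in> R \<and> red x \<equiv>\<^sub>m x"
  unfolding red_def by (rule theI') (rule R_complete)

lemma R_cong_m_imp_eq: "r \<in> R \<Longrightarrow> r' \<in> R \<Longrightarrow> r \<equiv>\<^sub>m r' \<Longrightarrow> r = r'"
  by (metis R_complete R_integers cong_m_refl subsetD)

lemma red_eq_iff: "x \<in> \<O> \<Longrightarrow> y \<in> \<O> \<Longrightarrow> red x = red y \<longleftrightarrow> x \<equiv>\<^sub>m y"
  by (metis R_cong_m_imp_eq cong_m_sym cong_m_trans red)

lemma bij_betw_red_comp:
  assumes "S \<subseteq> R" and into: "\<And>r. r \<in> S \<Longrightarrow> f r \<in> \<O> \<and> red (f r) \<in> S"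
    and cancel: "\<And>r r'. r \<in> S \<Longrightarrow> r' \<in> S \<Longrightarrow> f r \<equiv>\<^sub>m f r' \<Longrightarrow> r \<equiv>\<^sub>m r'"
  shows "bij_betw (\<lambda>r. red (f r)) S S"
proof -
  have "inj_on (\<lambda>r. red (f r)) S"
  proof (rule inj_onI)
    fix r r' assume "r \<in> S" "r' \<in> S" "red (f r) = red (f r')"
    then show "r = r'"
      using assms R_cong_m_imp_eq by (metis red_eq_iff subsetD)
  qed
  moreover have "finite S"
    using \<open>S \<subseteq> R\<close> finite_R finite_subset by blast
  moreover have "(\<lambda>r. red (f r)) ` S \<subseteq> S"
    using into by blast
  ultimately show ?thesis
    by (simp add: bij_betw_def endo_inj_surj)
qed

lemma of_nat_card_cong_m_0: "of_nat (card R) \<equiv>\<^sub>m 0"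
proof -
  have R_succ: "r + 1 \<in> \<O>" if "r \<in> R" for r
    using that R_integers by (meson integers_1 integers_add subsetD)
  have "bij_betw (\<lambda>r. red (r + 1)) R R"
    by (rule bij_betw_red_comp) (use R_succ red in auto)
  then have "sum (\<lambda>r. r) R = (\<Sum>r\<in>R. red (r + 1))"
    using sum.reindex_bij_betw[of _ R R "\<lambda>r. r"] by simp
  moreover have "(\<Sum>r\<in>R. red (r + 1)) \<equiv>\<^sub>m (\<Sum>r\<in>R. r + 1)"
    by (rule cong_m_sum) (use R_succ red in blast)
  ultimately have "sum (\<lambda>r. r) R \<equiv>\<^sub>m sum (\<lambda>r. r) R + of_nat (card R)"
    by (simp add: sum.distrib)
  then show ?thesis
    by (simp add: val_diff_commute)
qed

lemma unit_power_card_cong_m_1: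
  assumes u: "val v u = 0"
  shows "u ^ (card R - 1) \<equiv>\<^sub>m 1"
proof -
  define R' where "R' = R - {red 0}"
  have red_0: "red 0 \<in> R" "red 0 \<equiv>\<^sub>m 0"
    using red[of 0] by auto
  have R'_iff: "r \<in> R' \<longleftrightarrow> r \<in> R \<and> val v r = 0" for r
  proof -
    have "r = red 0 \<longleftrightarrow> r \<equiv>\<^sub>m 0" if "r \<in> R"
      using that red_0 R_cong_m_imp_eq[of r "red 0"] cong_m_trans[of r 0 "red 0"]
        cong_m_sym[of "red 0" 0] by auto
    then show ?thesis
      using R_integers unit_iff_not_cong_m_0 by (auto simp: R'_def)
  qed
  have u_int: "u \<in> \<O>"
    using u by (simp add: integers_iff)
  have ur: "u * r \<in> \<O>" "red (u * r) \<in> R" "red (u * r) \<equiv>\<^sub>m u * r" if "r \<in> R'" for r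
    using that u_int R_integers red[of "u * r"] by (auto simp: R'_iff)
  have "bij_betw (\<lambda>r. red (u * r)) R' R'"
  proof (rule bij_betw_red_comp)
    fix r assume "r \<in> R'"
    moreover from this have "val v (u * r) = 0"
      using u by (simp add: R'_iff val_mult)
    ultimately show "u * r \<in> \<O> \<and> red (u * r) \<in> R'"
      using ur unit_cong_m[of "u * r" "red (u * r)"] cong_m_sym[of "red (u * r)" "u * r"]
      by (auto simp: R'_iff)
  qed (use u cong_m_mult_cancel in \<open>auto simp: R'_def\<close>)
  then have "prod (\<lambda>r. r) R' = (\<Prod>r\<in>R'. red (u * r))"
    using prod.reindex_bij_betw[of _ R' R' "\<lambda>r. r"] by simp
  moreover have "(\<Prod>r\<in>R'. red (u * r)) \<equiv>\<^sub>m (\<Prod>r\<in>R'. u * r)"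
    using ur R_integers by (intro cong_m_prod) auto
  ultimately have "prod (\<lambda>r. r) R' * 1 \<equiv>\<^sub>m prod (\<lambda>r. r) R' * u ^ card R'"
    by (simp add: prod.distrib mult.commute)
  then have "1 \<equiv>\<^sub>m u ^ card R'"
    by (rule cong_m_mult_cancel[rotated]) (rule val_prod_unit, simp add: R'_iff)
  moreover have "card R' = card R - 1"
    using red_0 finite_R by (simp add: R'_def)
  ultimately show ?thesis
    by (simp add: cong_m_sym)
qed

end

lemma (in discrete_valuation) residue_system_exists:
  assumes "finite (residue_field v)"
  obtains R where "residue_system v R" "card R = card (residue_field v)"
proof -
  define E where "E = {(x, y). x \<in> \<O> \<and> y \<in> \<O> \<and> x \<equiv>\<^sub>m y}"
  define pick where "pick C = (SOME x. x \<in> C)" for C :: "'a set"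
  define R where "R = pick ` residue_field v"
  have E: "equiv \<O> E"
    by (rule equivI) (auto simp: E_def refl_on_def sym_def trans_def intro: cong_m_sym cong_m_trans)
  have residue_field: "residue_field v = \<O> // E"
    by (simp add: residue_field_def E_def)
  have pick: "pick C \<in> C" if "C \<in> \<O> // E" for C
    using in_quotient_imp_non_empty[OF E that] by (simp add: pick_def some_in_eq)
  have pick_cong: "pick (E `` {x}) \<equiv>\<^sub>m x" if "x \<in> \<O>" for x
    using pick[OF quotientI[OF that]] by (auto simp: E_def intro: cong_m_sym)
  have "R \<subseteq> \<O>"
    using pick in_quotient_imp_subset[OF E] residue_field by (auto simp: R_def)
  moreover have "\<exists>!r. r \<in> R \<and> r \<equiv>\<^sub>m x" if x: "x \<in> \<O>" for x
  proof (rule ex_ex1I)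
    show "\<exists>r. r \<in> R \<and> r \<equiv>\<^sub>m x"
      using x pick_cong quotientI[OF x] residue_field by (auto simp: R_def)
  next
    fix r r' assume "r \<in> R \<and> r \<equiv>\<^sub>m x" "r' \<in> R \<and> r' \<equiv>\<^sub>m x"
    then obtain y y' where "y \<in> \<O>" "y' \<in> \<O>" "r = pick (E `` {y})" "r' = pick (E `` {y'})"
      "r \<equiv>\<^sub>m x" "r' \<equiv>\<^sub>m x"
      using residue_field by (auto simp: quotient_def R_def)
    moreover from this have "y \<equiv>\<^sub>m y'"
      using pick_cong by (meson cong_m_sym cong_m_trans)
    ultimately show "r = r'"
      using equiv_class_eq[OF E] by (simp add: E_def)
  qed
  moreover have "finite R"
    using assms by (simp add: R_def)
  ultimately have "residue_system v R"
    by (intro residue_system.intro residue_system_axioms.intro discrete_valuation_axioms)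
  moreover have "card R = card (residue_field v)"
    unfolding R_def
  proof (rule card_image, rule inj_onI)
    fix C D assume C: "C \<in> residue_field v" and D: "D \<in> residue_field v" and "pick C = pick D"
    then have "pick C \<in> C \<inter> D"
      using pick residue_field by fastforce
    then show "C = D"
      using quotient_disj[OF E] C D residue_field by blast
  qed
  ultimately show thesis
    by (rule that)
qed




section \<open>Lucas sequences, powers of \<open>2 \<times> 2\<close> matrices and quadratic algebras\<close>

fun lucas_U :: "'a::comm_ring_1 \<Rightarrow> 'a \<Rightarrow> nat \<Rightarrow> 'a" where
  "lucas_U s d 0 = 0"
| "lucas_U s d (Suc 0) = 1"
| "lucas_U s d (Suc (Suc n)) = s * lucas_U s d (Suc n) - d * lucas_U s d n"

lemma lucas_U_induct [case_names 0 1 step]: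
  assumes "P 0" "P 1" "\<And>k. P k \<Longrightarrow> P (Suc k) \<Longrightarrow> P (Suc (Suc k))"
  shows "P k"
  by (rule lucas_U.induct[of "\<lambda>_ _ k. P k"]) (use assms in simp_all)

lemma lucas_U_roots: "(r - r') * lucas_U (r + r') (r * r') k = r ^ k - r' ^ k"
proof (induction k rule: lucas_U_induct)
  case (step k)
  let ?U = "lucas_U (r + r') (r * r')"
  have "(r - r') * ?U (Suc (Suc k)) = (r + r') * ((r - r') * ?U (Suc k)) - r * r' * ((r - r') * ?U k)"
    by (simp add: algebra_simps)
  also have "\<dots> = r ^ Suc (Suc k) - r' ^ Suc (Suc k)"
    by (simp only: step) (simp add: algebra_simps)
  finally show ?case .
qed simp_all

lemma lucas_U_double_root: "lucas_U (2 * l) (l ^ 2) (Suc k) = of_nat (Suc k) * l ^ k"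
proof -
  let ?U = "lucas_U (2 * l) (l ^ 2)"
  have "?U (Suc k) = of_nat (Suc k) * l ^ k \<and> ?U (Suc (Suc k)) = of_nat (Suc (Suc k)) * l ^ Suc k"
  proof (induction k)
    case (Suc k)
    have "?U (Suc (Suc (Suc k))) = 2 * l * ?U (Suc (Suc k)) - l ^ 2 * ?U (Suc k)"
      by (rule lucas_U.simps(3))
    also have "\<dots> = of_nat (Suc (Suc (Suc k))) * l ^ Suc (Suc k)"
      unfolding Suc[THEN conjunct1] Suc[THEN conjunct2] by (simp add: power2_eq_square algebra_simps)
    finally show ?case
      using Suc[THEN conjunct2] by (rule conjI[rotated])
  qed simp
  then show ?thesis ..
qed

lemma lucas_U_cassini:
  "lucas_U s d (Suc k) ^ 2 - s * lucas_U s d (Suc k) * lucas_U s d k + d * lucas_U s d k ^ 2 = d ^ k"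
proof (induction k)
  case (Suc k)
  let ?U = "lucas_U s d"
  have "?U (Suc (Suc k)) ^ 2 - s * ?U (Suc (Suc k)) * ?U (Suc k) + d * ?U (Suc k) ^ 2
      = d * (?U (Suc k) ^ 2 - s * ?U (Suc k) * ?U k + d * ?U k ^ 2)"
    by (simp add: power2_eq_square algebra_simps)
  with Suc show ?case
    by simp
qed simp

definition discr :: "'a::comm_ring_1^2^2 \<Rightarrow> 'a" where
  "discr g = mtrace g ^ 2 - 4 * det g"

lemma matrix_mult_2_entry: "((A::'a::comm_ring_1^2^2) ** B) $ i $ j = A $ i $ 1 * B $ 1 $ j + A $ i $ 2 * B $ 2 $ j"
  by (simp add: matrix_matrix_mult_def sum_2)

lemma mat_entry: "(mat c :: 'a::zero^'n^'n) $ i $ j = (if i = j then c else 0)"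
  by (simp add: mat_def)

lemma mpow_0 [simp]: "mpow g 0 = mat 1"
  by (simp add: mpow_def)

lemma mpow_Suc: "mpow g (Suc n) = mpow g n ** g"
  by (simp add: mpow_def)

lemma det_mpow: "det (mpow g n) = det g ^ n"
  by (induction n) (simp_all add: mpow_Suc det_mul)

text \<open>By Cayley--Hamilton, \<open>g\<^sup>2 = mtrace g \<cdot> g - det g\<close>.\<close>
lemma mpow_Suc_lucas_U:
  fixes g :: "'a::comm_ring_1^2^2"
  shows "mpow g (Suc k) $ i $ j =
    lucas_U (mtrace g) (det g) (Suc k) * g $ i $ j - (if i = j then det g * lucas_U (mtrace g) (det g) k else 0)"
proof (induction k arbitrary: i j)
  case (Suc k)
  let ?U = "lucas_U (mtrace g) (det g)"
  have cayley_hamilton: "(g ** g) $ i $ j = mtrace g * g $ i $ j - (if i = j then det g else 0)" for i j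
    using exhaust_2[of i] exhaust_2[of j]
    by (auto simp: matrix_mult_2_entry mtrace_def det_2 algebra_simps)
  have "mpow g (Suc (Suc k)) $ i $ j = mpow g (Suc k) $ i $ 1 * g $ 1 $ j + mpow g (Suc k) $ i $ 2 * g $ 2 $ j"
    by (simp add: mpow_Suc[of g "Suc k"] matrix_mult_2_entry)
  also have "\<dots> = ?U (Suc k) * (g ** g) $ i $ j - det g * ?U k * g $ i $ j"
    unfolding Suc.IH using exhaust_2[of i] by (auto simp: matrix_mult_2_entry algebra_simps)
  also have "\<dots> = ?U (Suc (Suc k)) * g $ i $ j - (if i = j then det g * ?U (Suc k) else 0)"
    by (simp add: cayley_hamilton algebra_simps)
  finally show ?case .
qed (simp add: mpow_Suc)

lemma discr_mpow: "discr (mpow g n) = discr g * lucas_U (mtrace g) (det g) n ^ 2"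
proof (cases n)
  case 0
  then show ?thesis
    by (simp add: discr_def mtrace_def mat_entry)
next
  case (Suc k)
  let ?s = "mtrace g" and ?d = "det g"
  let ?U' = "lucas_U ?s ?d (Suc k)" and ?U = "lucas_U ?s ?d k"
  have "mtrace (mpow g (Suc k)) = ?U' * ?s - 2 * ?d * ?U"
    by (simp add: mtrace_def mpow_Suc_lucas_U algebra_simps)
  then have "discr (mpow g (Suc k)) = (?U' * ?s - 2 * ?d * ?U) ^ 2 - 4 * ?d ^ Suc k"
    by (simp add: discr_def det_mpow)
  also have "\<dots> = discr g * ?U' ^ 2 + 4 * ?d * (?U' ^ 2 - ?s * ?U' * ?U + ?d * ?U ^ 2 - ?d ^ k)"
    by (simp add: discr_def power2_eq_square algebra_simps)
  also have "\<dots> = discr g * ?U' ^ 2"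
    by (simp only: lucas_U_cassini) simp
  finally show ?thesis
    using Suc by simp
qed

text \<open>A pair \<open>(a, b)\<close> stands for \<open>a + b\<theta>\<close> in \<open>R[\<theta>] = R[X] / (X\<^sup>2 - s X + d)\<close>.\<close>
definition qmul :: "'a::comm_ring_1 \<Rightarrow> 'a \<Rightarrow> 'a \<times> 'a \<Rightarrow> 'a \<times> 'a \<Rightarrow> 'a \<times> 'a" where
  "qmul s d X Y =
    (fst X * fst Y - d * snd X * snd Y, fst X * snd Y + snd X * fst Y + s * snd X * snd Y)"

definition qpow :: "'a::comm_ring_1 \<Rightarrow> 'a \<Rightarrow> 'a \<times> 'a \<Rightarrow> nat \<Rightarrow> 'a \<times> 'a" where
  "qpow s d X n = (qmul s d X ^^ n) (1, 0)"

definition qconj :: "'a::comm_ring_1 \<Rightarrow> 'a \<times> 'a \<Rightarrow> 'a \<times> 'a" where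
  "qconj s X = (fst X + s * snd X, - snd X)"

definition qnorm :: "'a::comm_ring_1 \<Rightarrow> 'a \<Rightarrow> 'a \<times> 'a \<Rightarrow> 'a" where
  "qnorm s d X = fst X ^ 2 + s * fst X * snd X + d * snd X ^ 2"

global_interpretation qprod: comm_monoid_set "qmul s d" "(1, 0)"
  for s d :: "'a::comm_ring_1"
  defines qprod = qprod.F
  by unfold_locales (simp_all add: qmul_def algebra_simps)

lemma qmul_commute: "qmul s d X Y = qmul s d Y X"
  by (simp add: qmul_def algebra_simps)

lemma qmul_conj: "qmul s d X (qconj s X) = (qnorm s d X, 0)"
  by (simp add: qmul_def qconj_def qnorm_def algebra_simps power2_eq_square)

lemma qpow_0 [simp]: "qpow s d X 0 = (1, 0)"
  by (simp add: qpow_def)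

lemma qpow_Suc: "qpow s d X (Suc n) = qmul s d X (qpow s d X n)"
  by (simp add: qpow_def)

lemma qpow_add: "qpow s d X (m + n) = qmul s d (qpow s d X m) (qpow s d X n)"
  by (induction m) (simp_all add: qpow_def qprod.assoc)

lemma qpow_mult: "qpow s d X (m * n) = qpow s d (qpow s d X m) n"
  by (induction n) (simp_all add: qpow_Suc qpow_add qmul_commute)

lemma qpow_scalar: "qpow s d (c, 0) n = (c ^ n, 0)"
  by (induction n) (simp_all add: qpow_Suc qmul_def)

lemma qpow_theta_Suc: "qpow s d (0, 1) (Suc n) = (- d * lucas_U s d n, lucas_U s d (Suc n))"
  by (induction n) (simp_all add: qpow_Suc qmul_def algebra_simps)

lemma qprod_const: "qprod s d (\<lambda>_. X) A = qpow s d X (card A)"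
  by (induction A rule: infinite_finite_induct) (simp_all add: qpow_Suc)

lemma qprod_scalar: "qprod s d (\<lambda>X. (f X, 0)) A = (prod f A, 0)"
  by (induction A rule: infinite_finite_induct) (simp_all add: qmul_def)

section \<open>When \<open>U\<^sub>n\<close> is a unit\<close>

context discrete_valuation
begin

lemma lucas_U_integer: "s \<in> \<O> \<Longrightarrow> d \<in> \<O> \<Longrightarrow> lucas_U s d k \<in> \<O>"
  by (induction k rule: lucas_U_induct) auto

lemma lucas_U_cong_m:
  assumes "s \<in> \<O>" "d \<in> \<O>" "s' \<in> \<O>" "d' \<in> \<O>" "s \<equiv>\<^sub>m s'" "d \<equiv>\<^sub>m d'"
  shows "lucas_U s d k \<equiv>\<^sub>m lucas_U s' d' k"
proof (induction k rule: lucas_U_induct)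
  case (step k)
  have "s * lucas_U s d (Suc k) \<equiv>\<^sub>m s' * lucas_U s' d' (Suc k)"
    using assms step lucas_U_integer by (intro cong_m_mult) auto
  moreover have "d * lucas_U s d k \<equiv>\<^sub>m d' * lucas_U s' d' k"
    using assms step lucas_U_integer by (intro cong_m_mult) auto
  ultimately show ?case
    by (simp only: lucas_U.simps cong_m_diff)
qed simp_all

text \<open>Modulo the maximal ideal, \<open>X\<^sup>2 - s X + d\<close> has the double root \<open>l = s / 2\<close>, and
  \<open>U\<^sub>n(2l, l\<^sup>2) = n l\<^sup>n\<^sup>-\<^sup>1\<close>.\<close>
lemma lucas_U_unit_ramified:
  assumes s: "s \<in> \<O>" and d: "val v d = 0" and two: "val v (2::'a) = 0"
    and disc: "0 < val v (s\<^sup>2 - 4 * d)" and n: "val v (of_nat n :: 'a) = 0"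
  shows "val v (lucas_U s d n) = 0"
proof -
  define l where "l = s / 2"
  have four: "val v (4::'a) = 0"
    using two val_mult[of "2::'a" 2] by simp
  have s_eq: "s = 2 * l"
    using two by (auto simp: l_def)
  have l_int: "l \<in> \<O>"
    using s two by (simp add: l_def integers_iff val_divide_unit)
  have "4 * (l\<^sup>2 - d) = s\<^sup>2 - 4 * d"
    by (simp add: s_eq power2_eq_square algebra_simps)
  then have d_cong: "d \<equiv>\<^sub>m l\<^sup>2"
    using disc four val_mult[of 4 "l\<^sup>2 - d"] by (simp add: val_diff_commute)
  have "val v (l * l) = 0"
    using unit_cong_m[OF d d_cong] by (simp add: power2_eq_square)
  then have l: "val v l = 0"
    using l_int val_mult_unit_iff by blast
  obtain k where k: "n = Suc k"
    using n by (cases n) auto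
  have "d \<in> \<O>"
    using d by (simp add: integers_iff)
  then have "lucas_U s d n \<equiv>\<^sub>m lucas_U (2 * l) (l\<^sup>2) n"
    using s l_int d_cong by (intro lucas_U_cong_m) (auto simp: s_eq)
  moreover have "val v (lucas_U (2 * l) (l\<^sup>2) n) = 0"
    using n l by (simp add: k lucas_U_double_root val_mult val_power_unit)
  ultimately show ?thesis
    using unit_cong_m cong_m_sym by blast
qed

end

context residue_system
begin

lemma cong_m_of_power_cong_m:
  assumes a: "val v a = 0" and b: "val v b = 0" and n: "coprime n (card R - 1)" "n \<noteq> 0"
    and "a ^ n \<equiv>\<^sub>m b ^ n"
  shows "a \<equiv>\<^sub>m b"
proof -
  obtain x y where xy: "n * x = (card R - 1) * y + 1"
    using bezout_nat[OF n(2), of "card R - 1"] n(1) by auto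
  have a_int: "a \<in> \<O>" and b_int: "b \<in> \<O>"
    using a b by (simp_all add: integers_iff)
  have reduce: "c ^ (n * x) \<equiv>\<^sub>m c" if "val v c = 0" for c
  proof -
    have c_int: "c \<in> \<O>"
      using that by (simp add: integers_iff)
    have "(c ^ (card R - 1)) ^ y \<equiv>\<^sub>m 1 ^ y"
      using unit_power_card_cong_m_1[OF that] c_int by (intro cong_m_power) auto
    then have "(c ^ (card R - 1)) ^ y \<equiv>\<^sub>m 1"
      by simp
    then have "c * (c ^ (card R - 1)) ^ y \<equiv>\<^sub>m c * 1"
      using c_int by (rule cong_m_mult_left[rotated])
    moreover have "c ^ (n * x) = c * (c ^ (card R - 1)) ^ y"
      by (simp add: xy power_add power_mult)
    ultimately show ?thesis
      by simp
  qed
  have "(a ^ n) ^ x \<equiv>\<^sub>m (b ^ n) ^ x"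
    by (rule cong_m_power) (use assms a_int b_int in auto)
  then have "a ^ (n * x) \<equiv>\<^sub>m b ^ (n * x)"
    by (simp add: power_mult)
  then show ?thesis
    using reduce[OF a] reduce[OF b] by (meson cong_m_sym cong_m_trans)
qed

text \<open>With the second root \<open>\<rho>' = s - \<rho>\<close>, \<open>(\<rho> - \<rho>') U\<^sub>n \<equiv> \<rho>\<^sup>n - \<rho>'\<^sup>n\<close>, and \<open>x \<mapsto> x\<^sup>n\<close> is injective
  on the units of the residue field.\<close>
lemma lucas_U_unit_split:
  assumes s: "s \<in> \<O>" and d: "val v d = 0" and disc: "val v (s\<^sup>2 - 4 * d) = 0"
    and \<rho>: "\<rho> \<in> \<O>" "\<rho>\<^sup>2 - s * \<rho> + d \<equiv>\<^sub>m 0"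
    and n: "coprime n (card R - 1)" "n \<noteq> 0"
  shows "val v (lucas_U s d n) = 0"
proof -
  define \<rho>' where "\<rho>' = s - \<rho>"
  have \<rho>'_int: "\<rho>' \<in> \<O>"
    using s \<rho> by (auto simp: \<rho>'_def)
  have d_int: "d \<in> \<O>"
    using d by (simp add: integers_iff)
  have d_cong: "d \<equiv>\<^sub>m \<rho> * \<rho>'"
    using \<rho>(2) by (simp add: \<rho>'_def algebra_simps power2_eq_square)
  then have "val v (\<rho> * \<rho>') = 0"
    using d unit_cong_m by blast
  then have \<rho>_unit: "val v \<rho> = 0" "val v \<rho>' = 0"
    using \<rho> \<rho>'_int val_mult_unit_iff by blast+
  have "(\<rho> - \<rho>')\<^sup>2 = (s\<^sup>2 - 4 * d) + 4 * (\<rho>\<^sup>2 - s * \<rho> + d)"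
    by (simp add: \<rho>'_def power2_eq_square algebra_simps)
  also have "val v \<dots> = val v (s\<^sup>2 - 4 * d)"
  proof (rule val_add_strict)
    show "val v (s\<^sup>2 - 4 * d) < val v (4 * (\<rho>\<^sup>2 - s * \<rho> + d))"
      unfolding disc by (rule val_mult_pos) (use \<rho>(2) in simp_all)
  qed
  finally have "val v ((\<rho> - \<rho>') * (\<rho> - \<rho>')) = 0"
    using disc by (simp add: power2_eq_square)
  then have roots_distinct: "val v (\<rho> - \<rho>') = 0"
    using \<rho> \<rho>'_int val_mult_unit_iff by blast
  have "lucas_U s d n \<equiv>\<^sub>m lucas_U (\<rho> + \<rho>') (\<rho> * \<rho>') n"
    using s d_int \<rho> \<rho>'_int d_cong by (intro lucas_U_cong_m) (auto simp: \<rho>'_def)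
  moreover have "\<not> lucas_U (\<rho> + \<rho>') (\<rho> * \<rho>') n \<equiv>\<^sub>m 0"
  proof
    assume "lucas_U (\<rho> + \<rho>') (\<rho> * \<rho>') n \<equiv>\<^sub>m 0"
    then have "(\<rho> - \<rho>') * lucas_U (\<rho> + \<rho>') (\<rho> * \<rho>') n \<equiv>\<^sub>m (\<rho> - \<rho>') * 0"
      using \<rho> \<rho>'_int by (intro cong_m_mult_left) auto
    then have "\<rho> ^ n \<equiv>\<^sub>m \<rho>' ^ n"
      by (simp add: lucas_U_roots)
    then have "\<rho> \<equiv>\<^sub>m \<rho>'"
      by (rule cong_m_of_power_cong_m[OF \<rho>_unit n])
    then show False
      using roots_distinct by simp
  qed
  ultimately have "\<not> lucas_U s d n \<equiv>\<^sub>m 0"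
    using cong_m_sym cong_m_trans by blast
  then show ?thesis
    using lucas_U_integer[OF s d_int] unit_iff_not_cong_m_0 by blast
qed

end

context discrete_valuation
begin

abbreviation qcong_m (infix "\<approx>\<^sub>m" 50) where "X \<approx>\<^sub>m Y \<equiv> fst X \<equiv>\<^sub>m fst Y \<and> snd X \<equiv>\<^sub>m snd Y"

lemma qcong_m_sym: "X \<approx>\<^sub>m Y \<Longrightarrow> Y \<approx>\<^sub>m X"
  by (simp add: cong_m_sym)

lemma qcong_m_trans: "X \<approx>\<^sub>m Y \<Longrightarrow> Y \<approx>\<^sub>m Z \<Longrightarrow> X \<approx>\<^sub>m Z"
  by (blast intro: cong_m_trans)

lemma qmul_integer:
  "s \<in> \<O> \<Longrightarrow> d \<in> \<O> \<Longrightarrow> X \<in> \<O> \<times> \<O> \<Longrightarrow> Y \<in> \<O> \<times> \<O> \<Longrightarrow> qmul s d X Y \<in> \<O> \<times> \<O>"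
  by (auto simp: qmul_def mem_Times_iff)

lemma qmul_cong_m:
  assumes "s \<in> \<O>" "d \<in> \<O>" "X \<in> \<O> \<times> \<O>" "W \<in> \<O> \<times> \<O>" "X \<approx>\<^sub>m Y" "Z \<approx>\<^sub>m W"
  shows "qmul s d X Z \<approx>\<^sub>m qmul s d Y W"
proof -
  have "fst X * fst Z \<equiv>\<^sub>m fst Y * fst W" "fst X * snd Z \<equiv>\<^sub>m fst Y * snd W"
    "snd X * fst Z \<equiv>\<^sub>m snd Y * fst W" "snd X * snd Z \<equiv>\<^sub>m snd Y * snd W"
    using assms by (auto simp: mem_Times_iff intro: cong_m_mult)
  then show ?thesis
    unfolding qmul_def fst_conv snd_conv mult.assoc
    using assms(1,2) by (intro conjI cong_m_add cong_m_diff cong_m_mult_left)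
qed

lemma qprod_integer:
  "s \<in> \<O> \<Longrightarrow> d \<in> \<O> \<Longrightarrow> (\<And>i. i \<in> A \<Longrightarrow> f i \<in> \<O> \<times> \<O>) \<Longrightarrow> qprod s d f A \<in> \<O> \<times> \<O>"
  by (induction A rule: infinite_finite_induct) (simp_all add: qmul_integer)

lemma qprod_cong_m:
  assumes "s \<in> \<O>" "d \<in> \<O>" "\<And>i. i \<in> A \<Longrightarrow> f i \<approx>\<^sub>m g i"
    "\<And>i. i \<in> A \<Longrightarrow> f i \<in> \<O> \<times> \<O>" "\<And>i. i \<in> A \<Longrightarrow> g i \<in> \<O> \<times> \<O>"
  shows "qprod s d f A \<approx>\<^sub>m qprod s d g A"
  using assms(3-)
proof (induction A rule: infinite_finite_induct)
  case (insert x F)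
  then show ?case
    using assms(1,2) by (simp add: qmul_cong_m qprod_integer)
qed simp_all

lemma qpow_integer: "s \<in> \<O> \<Longrightarrow> d \<in> \<O> \<Longrightarrow> X \<in> \<O> \<times> \<O> \<Longrightarrow> qpow s d X n \<in> \<O> \<times> \<O>"
  by (induction n) (simp_all add: qpow_Suc qmul_integer)

lemma qpow_cong_m:
  "s \<in> \<O> \<Longrightarrow> d \<in> \<O> \<Longrightarrow> X \<in> \<O> \<times> \<O> \<Longrightarrow> Y \<in> \<O> \<times> \<O> \<Longrightarrow> X \<approx>\<^sub>m Y \<Longrightarrow> qpow s d X n \<approx>\<^sub>m qpow s d Y n"
  by (induction n) (simp_all add: qpow_Suc qmul_cong_m qpow_integer)

lemma qmul_theta_cancel:
  assumes s: "s \<in> \<O>" and d: "val v d = 0" and Y: "Y \<in> \<O> \<times> \<O>"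
    and "qmul s d (0, 1) X \<approx>\<^sub>m qmul s d (0, 1) Y"
  shows "X \<approx>\<^sub>m Y"
proof -
  define \<theta>' where "\<theta>' = (s / d, - 1 / d)"
  have d_int: "d \<in> \<O>" and "d \<noteq> 0"
    using d by (auto simp: integers_iff)
  then have \<theta>'_inverse: "qmul s d \<theta>' (0, 1) = (1, 0)"
    by (simp add: qmul_def \<theta>'_def field_simps)
  have "\<theta>' \<in> \<O> \<times> \<O>"
    using s d by (simp add: \<theta>'_def integers_iff val_divide_unit)
  moreover have "qmul s d (0, 1) Y \<in> \<O> \<times> \<O>"
    using s d_int Y by (simp add: qmul_integer)
  ultimately have "qmul s d \<theta>' (qmul s d (0, 1) X) \<approx>\<^sub>m qmul s d \<theta>' (qmul s d (0, 1) Y)"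
    using s d_int assms(4) by (simp add: qmul_cong_m)
  then show ?thesis
    by (simp add: qprod.assoc[symmetric] \<theta>'_inverse)
qed

lemma qnorm_unit:
  assumes s: "s \<in> \<O>" and d: "d \<in> \<O>" and irreducible: "\<And>\<rho>. \<rho> \<in> \<O> \<Longrightarrow> \<not> \<rho>\<^sup>2 - s * \<rho> + d \<equiv>\<^sub>m 0"
    and X: "X \<in> \<O> \<times> \<O>" "\<not> X \<approx>\<^sub>m (0, 0)"
  shows "val v (qnorm s d X) = 0"
proof -
  obtain a b where ab: "X = (a, b)" "a \<in> \<O>" "b \<in> \<O>"
    using X by auto
  show ?thesis
  proof (cases "b \<equiv>\<^sub>m 0")
    case False
    then have b: "val v b = 0" "b \<noteq> 0"
      using ab unit_iff_not_cong_m_0 by auto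
    define \<rho> where "\<rho> = - a / b"
    have "\<rho> \<in> \<O>"
      using ab b by (simp add: \<rho>_def integers_iff val_divide_unit)
    moreover from this have "\<rho>\<^sup>2 - s * \<rho> + d \<in> \<O>"
      using s d by auto
    ultimately have "val v (\<rho>\<^sup>2 - s * \<rho> + d) = 0"
      using irreducible unit_iff_not_cong_m_0 by blast
    moreover have "qnorm s d X = b\<^sup>2 * (\<rho>\<^sup>2 - s * \<rho> + d)"
      using b by (simp add: ab qnorm_def \<rho>_def field_simps power2_eq_square)
    ultimately show ?thesis
      using b by (simp add: val_mult val_power_unit)
  next
    case True
    then have a: "val v a = 0"
      using X ab unit_iff_not_cong_m_0 by auto
    have "0 < val v ((s * a + d * b) * b)"
      by (rule val_mult_pos) (use True ab s d in auto)
    then have small: "0 < val v (b * (s * a + d * b))"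
      by (simp only: mult.commute)
    have "qnorm s d X = a\<^sup>2 + b * (s * a + d * b)"
      by (simp add: ab qnorm_def algebra_simps power2_eq_square)
    also have "val v \<dots> = val v (a\<^sup>2)"
      by (rule val_add_strict) (simp only: val_power_unit[OF a] small)
    finally show ?thesis
      using a by (simp add: val_power_unit)
  qed
qed

end

context residue_system
begin

definition red2 :: "'a \<times> 'a \<Rightarrow> 'a \<times> 'a" where
  "red2 X = (red (fst X), red (snd X))"

definition nonzero_pairs :: "('a \<times> 'a) set" where
  "nonzero_pairs = R \<times> R - {red2 (0, 0)}"

lemma red2: "X \<in> \<O> \<times> \<O> \<Longrightarrow> red2 X \<in> R \<times> R \<and> red2 X \<approx>\<^sub>m X"
  using red by (auto simp: red2_def mem_Times_iff)

lemma R_pairs_cong_m_imp_eq: "X \<in> R \<times> R \<Longrightarrow> Y \<in> R \<times> R \<Longrightarrow> X \<approx>\<^sub>m Y \<Longrightarrow> X = Y"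
  using R_cong_m_imp_eq by (auto simp: prod_eq_iff mem_Times_iff)

lemma nonzero_pairs_iff: "X \<in> nonzero_pairs \<longleftrightarrow> X \<in> R \<times> R \<and> \<not> X \<approx>\<^sub>m (0, 0)"
proof -
  have zero: "red2 (0, 0) \<in> R \<times> R" "red2 (0, 0) \<approx>\<^sub>m (0, 0)"
    using red2[of "(0, 0)"] by simp_all
  have "X = red2 (0, 0) \<longleftrightarrow> X \<approx>\<^sub>m (0, 0)" if "X \<in> R \<times> R"
  proof
    assume "X \<approx>\<^sub>m (0, 0)"
    then have "X \<approx>\<^sub>m red2 (0, 0)"
      using qcong_m_sym[OF zero(2)] by (rule qcong_m_trans)
    then show "X = red2 (0, 0)"
      by (rule R_pairs_cong_m_imp_eq[OF that zero(1)])
  qed (use zero in simp)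
  then show ?thesis
    by (auto simp: nonzero_pairs_def)
qed

lemma nonzero_pairs_integer: "X \<in> nonzero_pairs \<Longrightarrow> X \<in> \<O> \<times> \<O>"
  using R_integers by (auto simp: nonzero_pairs_iff)

lemma card_nonzero_pairs: "card nonzero_pairs = card R ^ 2 - 1"
  using red2[of "(0, 0)"] finite_R
  by (simp add: nonzero_pairs_def card_cartesian_product power2_eq_square)

lemma bij_betw_theta_mult:
  assumes s: "s \<in> \<O>" and d: "val v d = 0"
  shows "bij_betw (\<lambda>X. red2 (qmul s d (0, 1) X)) nonzero_pairs nonzero_pairs"
proof -
  define \<phi> where "\<phi> X = red2 (qmul s d (0, 1) X)" for X
  have "qmul s d (0, 1) X \<in> \<O> \<times> \<O>" if "X \<in> nonzero_pairs" for X
    using that s d nonzero_pairs_integer by (simp add: qmul_integer integers_iff)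
  then have \<phi>: "\<phi> X \<in> R \<times> R" "\<phi> X \<approx>\<^sub>m qmul s d (0, 1) X" if "X \<in> nonzero_pairs" for X
    using red2 that by (simp_all add: \<phi>_def)
  have "inj_on \<phi> nonzero_pairs"
  proof (rule inj_onI)
    fix X Y assume XY: "X \<in> nonzero_pairs" "Y \<in> nonzero_pairs" "\<phi> X = \<phi> Y"
    then have "qmul s d (0, 1) X \<approx>\<^sub>m qmul s d (0, 1) Y"
      using qcong_m_trans[OF qcong_m_sym[OF \<phi>(2)[OF XY(1)]], of "qmul s d (0, 1) Y"] \<phi>(2)[OF XY(2)]
      by simp
    then show "X = Y"
      using XY R_pairs_cong_m_imp_eq qmul_theta_cancel[OF s d] nonzero_pairs_integer
      by (simp add: nonzero_pairs_iff)
  qed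
  moreover have "\<phi> X \<in> nonzero_pairs" if "X \<in> nonzero_pairs" for X
  proof -
    have "\<not> \<phi> X \<approx>\<^sub>m (0, 0)"
    proof
      assume "\<phi> X \<approx>\<^sub>m (0, 0)"
      then have "qmul s d (0, 1) X \<approx>\<^sub>m (0, 0)"
        by (rule qcong_m_trans[OF qcong_m_sym[OF \<phi>(2)[OF that]]])
      moreover have "qmul s d (0, 1) (0, 0) = (0, 0)"
        by (simp add: qmul_def)
      ultimately have "X \<approx>\<^sub>m (0, 0)"
        by (intro qmul_theta_cancel[OF s d, of "(0, 0)"]) simp_all
      with that show False
        by (simp add: nonzero_pairs_iff)
    qed
    then show ?thesis
      using \<phi>(1)[OF that] by (simp add: nonzero_pairs_iff)
  qed
  moreover have "finite nonzero_pairs"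
    using finite_R by (simp add: nonzero_pairs_def)
  ultimately show ?thesis
    unfolding \<phi>_def[symmetric] by (simp add: bij_betw_def endo_inj_surj image_subset_iff)
qed

lemma qprod_nonzero_pairs_cong_m:
  assumes s: "s \<in> \<O>" and d: "val v d = 0"
  shows "qprod s d (\<lambda>X. X) nonzero_pairs
    \<approx>\<^sub>m qmul s d (qpow s d (0, 1) (card nonzero_pairs)) (qprod s d (\<lambda>X. X) nonzero_pairs)"
proof -
  let ?T = nonzero_pairs
  have d_int: "d \<in> \<O>"
    using d by (simp add: integers_iff)
  have "qprod s d (\<lambda>X. X) ?T = qprod s d (\<lambda>X. red2 (qmul s d (0, 1) X)) ?T"
    using qprod.reindex_bij_betw[OF bij_betw_theta_mult[OF s d], where g = "\<lambda>X. X"] by simp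
  moreover have "qprod s d (\<lambda>X. red2 (qmul s d (0, 1) X)) ?T \<approx>\<^sub>m qprod s d (qmul s d (0, 1)) ?T"
  proof (rule qprod_cong_m[OF s d_int])
    fix X assume "X \<in> ?T"
    then have \<theta>X: "qmul s d (0, 1) X \<in> \<O> \<times> \<O>"
      using s d_int nonzero_pairs_integer by (simp add: qmul_integer)
    then show "red2 (qmul s d (0, 1) X) \<approx>\<^sub>m qmul s d (0, 1) X" "qmul s d (0, 1) X \<in> \<O> \<times> \<O>"
      using red2 by simp_all
    show "red2 (qmul s d (0, 1) X) \<in> \<O> \<times> \<O>"
      using red2[OF \<theta>X] R_integers by auto
  qed
  moreover have "qprod s d (qmul s d (0, 1)) ?T
      = qmul s d (qpow s d (0, 1) (card ?T)) (qprod s d (\<lambda>X. X) ?T)"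
    using qprod.distrib[of s d "\<lambda>_. (0, 1)" "\<lambda>X. X"] by (simp add: qprod_const)
  ultimately show ?thesis
    by simp
qed

text \<open>Fermat's little theorem for the residue field of \<open>\<O>[\<theta>]\<close>, which has \<open>card R\<^sup>2\<close> elements
  when \<open>X\<^sup>2 - s X + d\<close> is irreducible modulo the maximal ideal: the product \<open>P\<close> of all nonzero
  residue pairs satisfies \<open>P \<equiv> \<theta>\<^sup>N P\<close> with \<open>N = card R\<^sup>2 - 1\<close>, and \<open>P\<close> can be cancelled since
  its norm is a unit.\<close>
lemma qpow_theta_card_cong_m_1:
  assumes s: "s \<in> \<O>" and d: "val v d = 0"
    and irreducible: "\<And>\<rho>. \<rho> \<in> \<O> \<Longrightarrow> \<not> \<rho>\<^sup>2 - s * \<rho> + d \<equiv>\<^sub>m 0"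
  shows "qpow s d (0, 1) (card R ^ 2 - 1) \<approx>\<^sub>m (1, 0)"
proof -
  let ?T = nonzero_pairs
  define P where "P = qprod s d (\<lambda>X. X) ?T"
  define \<Theta> where "\<Theta> = qpow s d (0, 1) (card ?T)"
  have d_int: "d \<in> \<O>"
    using d by (simp add: integers_iff)
  have P_int: "P \<in> \<O> \<times> \<O>"
    unfolding P_def by (rule qprod_integer[OF s d_int]) (rule nonzero_pairs_integer)
  have "P \<approx>\<^sub>m qmul s d \<Theta> P"
    unfolding P_def \<Theta>_def by (rule qprod_nonzero_pairs_cong_m[OF s d])
  define Q where "Q = qprod s d (qconj s) ?T"
  define u where "u = prod (qnorm s d) ?T"
  have "Q \<in> \<O> \<times> \<O>"
    unfolding Q_def using s nonzero_pairs_integer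
    by (intro qprod_integer[OF s d_int]) (auto simp: qconj_def mem_Times_iff)
  then have "qmul s d P Q \<approx>\<^sub>m qmul s d (qmul s d \<Theta> P) Q"
    using \<open>P \<approx>\<^sub>m qmul s d \<Theta> P\<close> P_int s d_int by (simp add: qmul_cong_m)
  moreover have "qmul s d P Q = (u, 0)"
    by (simp add: P_def Q_def u_def qprod.distrib[symmetric] qmul_conj qprod_scalar)
  moreover from this have "qmul s d (qmul s d \<Theta> P) Q = qmul s d \<Theta> (u, 0)"
    by (simp only: qprod.assoc)
  ultimately have "(u, 0) \<approx>\<^sub>m qmul s d \<Theta> (u, 0)"
    by simp
  moreover obtain t1 t2 where \<Theta>_eq: "\<Theta> = (t1, t2)"
    by fastforce
  ultimately have "u * 1 \<equiv>\<^sub>m u * t1" "u * 0 \<equiv>\<^sub>m u * t2"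
    by (simp_all add: qmul_def mult.commute)
  moreover have "val v u = 0"
    unfolding u_def using s d_int irreducible nonzero_pairs_integer
    by (intro val_prod_unit qnorm_unit) (auto simp: nonzero_pairs_iff)
  ultimately have "1 \<equiv>\<^sub>m t1" "0 \<equiv>\<^sub>m t2"
    using cong_m_mult_cancel by blast+
  then have "\<Theta> \<approx>\<^sub>m (1, 0)"
    by (simp add: \<Theta>_eq val_diff_commute)
  then show ?thesis
    by (simp add: \<Theta>_def card_nonzero_pairs)
qed

text \<open>\<open>\<theta>\<^sup>n = (-d U\<^sub>n\<^sub>-\<^sub>1, U\<^sub>n)\<close>; if \<open>U\<^sub>n \<equiv> 0\<close>, then \<open>\<theta>\<^sup>n\<close> is a scalar modulo the maximal ideal,
  hence so is \<open>\<theta>\<close>, since \<open>n\<close> is invertible modulo \<open>card R\<^sup>2 - 1\<close>.\<close>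
lemma lucas_U_unit_inert:
  assumes s: "s \<in> \<O>" and d: "val v d = 0"
    and irreducible: "\<And>\<rho>. \<rho> \<in> \<O> \<Longrightarrow> \<not> \<rho>\<^sup>2 - s * \<rho> + d \<equiv>\<^sub>m 0"
    and n: "coprime n (card R ^ 2 - 1)" "n \<noteq> 0"
  shows "val v (lucas_U s d n) = 0"
proof -
  define m where "m = card R ^ 2 - 1"
  have d_int: "d \<in> \<O>"
    using d by (simp add: integers_iff)
  have \<theta>_int: "(0, 1) \<in> \<O> \<times> \<O>"
    by simp
  obtain k where k: "n = Suc k"
    using n(2) not0_implies_Suc by blast
  obtain x y where xy: "n * x = m * y + 1"
    using bezout_nat[OF n(2), of m] n(1) by (auto simp: m_def)
  have "\<not> lucas_U s d n \<equiv>\<^sub>m 0"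
  proof
    assume U: "lucas_U s d n \<equiv>\<^sub>m 0"
    define c where "c = - d * lucas_U s d k"
    have c_int: "(c, 0) \<in> \<O> \<times> \<O>"
      using lucas_U_integer[OF s d_int, of k] d_int by (auto simp: c_def)
    have "qpow s d (0, 1) n \<approx>\<^sub>m (c, 0)"
      using U by (simp add: k qpow_theta_Suc c_def)
    then have "qpow s d (qpow s d (0, 1) n) x \<approx>\<^sub>m qpow s d (c, 0) x"
      using s d_int c_int by (intro qpow_cong_m qpow_integer) simp_all
    then have power: "qpow s d (0, 1) (n * x) \<approx>\<^sub>m (c ^ x, 0)"
      by (simp add: qpow_mult qpow_scalar)
    have "qpow s d (qpow s d (0, 1) m) y \<approx>\<^sub>m qpow s d (1, 0) y"
      using qpow_theta_card_cong_m_1[OF s d irreducible] s d_int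
      by (intro qpow_cong_m qpow_integer) (simp_all add: m_def)
    then have "qmul s d (qpow s d (qpow s d (0, 1) m) y) (0, 1) \<approx>\<^sub>m qmul s d (qpow s d (1, 0) y) (0, 1)"
      using s d_int by (intro qmul_cong_m qpow_integer) simp_all
    then have "qpow s d (0, 1) (n * x) \<approx>\<^sub>m (0, 1)"
      using qpow_scalar[of s d 1 y]
      by (simp add: xy qpow_add qpow_mult qmul_commute[of s d _ "(0, 1)"] qpow_Suc)
    then have "(0, 1) \<approx>\<^sub>m (c ^ x, 0)"
      using power qcong_m_sym qcong_m_trans by blast
    then show False
      by simp
  qed
  then show ?thesis
    using lucas_U_integer[OF s d_int] unit_iff_not_cong_m_0 by blast
qed

lemma lucas_U_unit:
  assumes s: "s \<in> \<O>" and d: "val v d = 0" and two: "val v (2::'a) = 0"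
    and n: "coprime n ((card R - 1) * card R * (card R + 1))"
  shows "val v (lucas_U s d n) = 0"
proof -
  have "n \<noteq> 0"
  proof
    assume "n = 0"
    then have product: "(card R - 1) * card R * (card R + 1) = 1"
      using n by simp
    then have "card R + 1 dvd 1"
      by (metis dvd_triv_right)
    with product show False
      by simp
  qed
  have n_factors: "coprime n (card R - 1)" "coprime n (card R)" "coprime n (card R + 1)"
    using n by (simp_all only: coprime_mult_right_iff)
  have d_int: "d \<in> \<O>"
    using d by (simp add: integers_iff)
  have disc_int: "s\<^sup>2 - 4 * d \<in> \<O>"
    using s d_int by (intro integers_diff integers_mult integers_power) simp_all
  consider (ramified) "0 < val v (s\<^sup>2 - 4 * d)"
    | (split) \<rho> where "val v (s\<^sup>2 - 4 * d) = 0" "\<rho> \<in> \<O>" "\<rho>\<^sup>2 - s * \<rho> + d \<equiv>\<^sub>m 0"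
    | (inert) "\<And>\<rho>. \<rho> \<in> \<O> \<Longrightarrow> \<not> \<rho>\<^sup>2 - s * \<rho> + d \<equiv>\<^sub>m 0"
    using disc_int unit_iff_not_cong_m_0 by (metis diff_zero)
  then show ?thesis
  proof cases
    case ramified
    have "val v (of_nat n :: 'a) = 0"
      using n_factors(2) of_nat_card_cong_m_0 by (intro val_of_nat_coprime) simp_all
    with ramified show ?thesis
      using lucas_U_unit_ramified s d two by blast
  next
    case split
    then show ?thesis
      using lucas_U_unit_split s d n_factors(1) \<open>n \<noteq> 0\<close> by blast
  next
    case inert
    have "card R ^ 2 - 1 = (card R - 1) * (card R + 1)"
      by (cases "card R") (simp_all add: power2_eq_square)
    then have "coprime n (card R ^ 2 - 1)"
      using n_factors by (simp only: coprime_mult_right_iff)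
    with inert show ?thesis
      using lucas_U_unit_inert s d \<open>n \<noteq> 0\<close> by blast
  qed
qed

end

section \<open>Maximal depth and Weyl discriminant on \<open>GL\<^sub>2(\<O>)\<close>\<close>

lemma mvec_2_entry: "((M::'a::comm_ring_1^2^2) *v x) $ i = M $ i $ 1 * x $ 1 + M $ i $ 2 * x $ 2"
  by (simp add: matrix_vector_mult_def sum_2)

lemma scale_shift_entry:
  "(mat z ** g - mat 1 :: 'a::comm_ring_1^2^2) $ i $ j = z * g $ i $ j - (if i = j then 1 else 0)"
  using exhaust_2[of i] by (auto simp: matrix_mult_2_entry mat_entry)

lemma det_scale_shift:
  "z\<^sup>2 * det g = 1 + (det (mat z ** g - mat 1) + mtrace (mat z ** g - mat 1 :: 'a::comm_ring_1^2^2))"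
  unfolding det_2 mtrace_def scale_shift_entry by (simp add: det_2 power2_eq_square algebra_simps)

lemma discr_scale_shift:
  "mtrace (mat z ** g - mat 1) ^ 2 - 4 * det (mat z ** g - mat 1 :: 'a::comm_ring_1^2^2) = z\<^sup>2 * discr g"
  unfolding det_2 mtrace_def scale_shift_entry by (simp add: det_2 mtrace_def discr_def power2_eq_square algebra_simps)

lemma trace_eq_mtrace: "trace (A::'a::comm_ring_1^2^2) = mtrace A"
  by (simp add: trace_def mtrace_def sum_2)

lemma mtrace_det_conj:
  fixes B B' h :: "'a::comm_ring_1^2^2"
  assumes "B ** B' = mat 1" "B' ** B = mat 1"
  shows "mtrace (B' ** h ** B) = mtrace h" "det (B' ** h ** B) = det h"
proof -
  have "mtrace (B' ** h ** B) = trace (B' ** (h ** B))"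
    by (simp add: matrix_mul_assoc trace_eq_mtrace)
  also have "\<dots> = trace ((h ** B) ** B')"
    by (rule trace_mul_sym)
  also have "\<dots> = trace (h ** (B ** B'))"
    by (simp only: matrix_mul_assoc)
  finally show "mtrace (B' ** h ** B) = mtrace h"
    by (simp add: assms(1) trace_eq_mtrace)
  have "det (B' ** h ** B) = det h * (det B' * det B)"
    by (simp add: det_mul algebra_simps)
  then show "det (B' ** h ** B) = det h"
    using assms(2) det_mul[of B' B] by simp
qed

context discrete_valuation
begin

text \<open>The Moy--Prasad lattice \<open>\<g>\<^sub>x\<^sub>,\<^sub>r\<close> of the point \<open>x = (a\<^sub>1, a\<^sub>2)\<close> of the apartment of a basis,
  written in that basis: \<open>ord M\<^sub>i\<^sub>j \<ge> a\<^sub>j - a\<^sub>i + r\<close>.\<close>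
definition mp_lattice :: "real \<Rightarrow> real \<Rightarrow> real \<Rightarrow> 'a^2^2 \<Rightarrow> bool" where
  "mp_lattice a1 a2 r M \<longleftrightarrow>
    ereal r \<le> val v (M $ 1 $ 1) \<and> ereal (a2 - a1 + r) \<le> val v (M $ 1 $ 2) \<and>
    ereal (a1 - a2 + r) \<le> val v (M $ 2 $ 1) \<and> ereal r \<le> val v (M $ 2 $ 2)"

lemma val_mult_shift:
  assumes "ereal c \<le> val v m" and "N \<le> val v x + ereal a"
  shows "N + ereal (c - a + b) \<le> val v (m * x) + ereal b"
proof (cases "m = 0 \<or> x = 0")
  case False
  then have "val v (m * x) + ereal b = ereal (v m + v x + b)"
    by (simp add: val_def v_mult)
  moreover have "real_of_int (v m) \<ge> c" and "N \<le> ereal (v x + a)"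
    using assms False by (simp_all add: val_def)
  ultimately show ?thesis
    by (cases N) simp_all
qed auto

lemma val_add_ge_plus: "C \<le> val v x + e \<Longrightarrow> C \<le> val v y + e \<Longrightarrow> C \<le> val v (x + y) + e"
  using val_add[of x y] add_right_mono[of "min (val v x) (val v y)" "val v (x + y)" e]
  by (auto simp: min_def split: if_splits)

lemma bnorm_mult_ge:
  assumes "mp_lattice a1 a2 r M"
  shows "bnorm v a1 a2 x + ereal r \<le> bnorm v a1 a2 (M *v x)"
proof -
  let ?N = "bnorm v a1 a2 x"
  have N: "?N \<le> val v (x $ 1) + ereal a1" "?N \<le> val v (x $ 2) + ereal a2"
    by (simp_all add: bnorm_def)
  have row: "?N + ereal r \<le> val v ((M *v x) $ i) + ereal a"
    if "ereal (a1 - a + r) \<le> val v (M $ i $ 1)" "ereal (a2 - a + r) \<le> val v (M $ i $ 2)" for i a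
    unfolding mvec_2_entry
    using val_mult_shift[OF that(1) N(1), of a] val_mult_shift[OF that(2) N(2), of a]
    by (intro val_add_ge_plus) simp_all
  show ?thesis
    using row[where i = 1 and a = a1] row[where i = 2 and a = a2] assms by (simp add: bnorm_def[of _ _ _ "M *v x"] mp_lattice_def)
qed

lemma bnorm_add: "min (bnorm v a1 a2 x) (bnorm v a1 a2 y) \<le> bnorm v a1 a2 (x + y)"
proof -
  have "min (bnorm v a1 a2 x) (bnorm v a1 a2 y) \<le> val v (x $ i + y $ i) + ereal a" 
    if "bnorm v a1 a2 x \<le> val v (x $ i) + ereal a" "bnorm v a1 a2 y \<le> val v (y $ i) + ereal a" for i a
    using that by (intro val_add_ge_plus) (auto intro: min.coboundedI1 min.coboundedI2)
  then show ?thesis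
    by (simp add: bnorm_def[of _ _ _ "x + y"]) (simp add: bnorm_def)
qed

lemma bnorm_minus [simp]: "bnorm v a1 a2 (- x) = bnorm v a1 a2 x"
  by (simp add: bnorm_def)

lemma bnorm_neq_minus_infinity: "bnorm v a1 a2 x \<noteq> -\<infinity>"
  by (simp add: bnorm_def min_def)

lemma bnorm_add_mult_eq:
  assumes "mp_lattice a1 a2 r M" and "0 < r"
  shows "bnorm v a1 a2 (x + M *v x) = bnorm v a1 a2 x"
proof -
  let ?N = "bnorm v a1 a2 x" and ?G = "bnorm v a1 a2 (M *v x)"
  have G: "?N + ereal r \<le> ?G"
    using assms(1) by (rule bnorm_mult_ge)
  have N_le: "?N \<le> ?N + ereal r"
    using \<open>0 < r\<close> bnorm_neq_minus_infinity[of a1 a2 x] by (cases ?N) auto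
  have "?N \<le> bnorm v a1 a2 (x + M *v x)"
    using bnorm_add[of a1 a2 x "M *v x"] G N_le by (simp add: min_def split: if_splits)
  moreover have "bnorm v a1 a2 (x + M *v x) \<le> ?N"
  proof (cases "?G \<le> ?N")
    case True
    then have "?N = \<infinity>"
      using G \<open>0 < r\<close> bnorm_neq_minus_infinity[of a1 a2 x] by (cases ?N; cases ?G) auto
    then show ?thesis
      by simp
  next
    case False
    then show ?thesis
      using bnorm_add[of a1 a2 "x + M *v x" "- (M *v x)"] by (simp add: min_def split: if_splits)
  qed
  ultimately show ?thesis
    by (rule antisym[rotated])
qed

lemma mp_lattice_of_bnorm:
  assumes "\<And>x. bnorm v a1 a2 x + ereal r \<le> bnorm v a1 a2 (M *v x)"
  shows "mp_lattice a1 a2 r M"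
proof -
  have entry: "ereal ((if j = 1 then a1 else a2) - (if i = 1 then a1 else a2) + r) \<le> val v (M $ i $ j)"
    for i j
  proof -
    define e :: "'a^2" where "e = (\<chi> k. if k = j then 1 else 0)"
    have "bnorm v a1 a2 e = ereal (if j = 1 then a1 else a2)"
      using exhaust_2[of j] by (auto simp: bnorm_def e_def)
    moreover have "(M *v e) $ k = M $ k $ j" for k
      using exhaust_2[of j] by (auto simp: mvec_2_entry e_def)
    ultimately have "ereal (if j = 1 then a1 else a2) + ereal r \<le> val v (M $ i $ j) + ereal (if i = 1 then a1 else a2)"
      using assms[of e] exhaust_2[of i] by (auto simp: bnorm_def)
    then show ?thesis
      by (cases "val v (M $ i $ j)") auto
  qed
  show ?thesis
    using entry[of 1 1] entry[of 1 2] entry[of 2 1] entry[of 2 2] by (simp add: mp_lattice_def)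
qed

lemma mp_lattice_of_MP_filt:
  assumes "g \<in> MP_filt v B a1 a2 r" and "(g - mat 1) ** B = B ** M"
  shows "mp_lattice a1 a2 r M"
proof (rule mp_lattice_of_bnorm)
  fix x
  have "(g - mat 1) *v (B *v x) = B *v (M *v x)"
    by (simp add: matrix_vector_mul_assoc assms(2))
  then show "bnorm v a1 a2 x + ereal r \<le> bnorm v a1 a2 (M *v x)"
    using assms(1) by (simp add: MP_filt_def)
qed

lemma MP_filt_of_mp_lattice:
  assumes "det B \<noteq> 0" "det g \<noteq> 0" "0 < r"
    and "(g - mat 1) ** B = B ** M" "mp_lattice a1 a2 r M"
  shows "g \<in> MP_filt v B a1 a2 r"
proof -
  have B_inj: "B *v x = B *v y \<Longrightarrow> x = y" for x y
    using inj_matrix_vector_mult[of B] assms(1) invertible_det_nz by (auto dest: injD)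
  have h: "(g - mat 1) *v (B *v x) = B *v (M *v x)" for x
    by (simp add: matrix_vector_mul_assoc assms(4))
  have g: "g *v (B *v x) = B *v (x + M *v x)" for x
    using h[of x] by (simp add: matrix_vector_mult_diff_rdistrib matrix_vector_right_distrib diff_eq_eq add.commute)
  show ?thesis
    unfolding MP_filt_def
  proof (intro CollectI conjI allI impI)
    fix x y
    assume "g *v (B *v x) = B *v y"
    then have "y = x + M *v x"
      using g B_inj by metis
    then show "bnorm v a1 a2 y = bnorm v a1 a2 x"
      using bnorm_add_mult_eq[OF assms(5,3)] by simp
  next
    fix x y
    assume "(g - mat 1) *v (B *v x) = B *v y"
    then have "y = M *v x"
      using h B_inj by metis
    then show "bnorm v a1 a2 x + ereal r \<le> bnorm v a1 a2 y"
      using bnorm_mult_ge[OF assms(5)] by simp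
  qed (rule assms(2))
qed

lemma val_mult_ge: "ereal c \<le> val v x \<Longrightarrow> ereal c' \<le> val v y \<Longrightarrow> ereal (c + c') \<le> val v (x * y)"
  using add_mono[of "ereal c" "val v x" "ereal c'" "val v y"] by (simp add: val_mult)

lemma mp_lattice_trace_det:
  assumes "mp_lattice a1 a2 r M"
  shows "ereal r \<le> val v (mtrace M)" "ereal (2 * r) \<le> val v (det M)"
    "ereal (2 * r) \<le> val v (mtrace M ^ 2 - 4 * det M)"
proof -
  have diag: "ereal r \<le> val v (M $ 1 $ 1)" "ereal r \<le> val v (M $ 2 $ 2)"
    and off_diag: "ereal (2 * r) \<le> val v (M $ 1 $ 2 * M $ 2 $ 1)"
    using assms val_mult_ge[of "a2 - a1 + r" "M $ 1 $ 2" "a1 - a2 + r" "M $ 2 $ 1"]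
    by (simp_all add: mp_lattice_def)
  have diag_diff: "ereal r \<le> val v (M $ 1 $ 1 - M $ 2 $ 2)"
    using diag by (rule val_diff_ge)
  have diag_sq: "ereal (2 * r) \<le> val v ((M $ 1 $ 1 - M $ 2 $ 2) * (M $ 1 $ 1 - M $ 2 $ 2))"
    using val_mult_ge[OF diag_diff diag_diff] by (simp only: mult_2)
  have four: "val v y \<le> val v (4 * y)" for y
    using add_right_mono[of 0 "val v (4::'a)" "val v y"] by (simp add: val_mult integers_iff[symmetric])
  show "ereal r \<le> val v (mtrace M)"
    unfolding mtrace_def using diag by (rule val_add_ge)
  show "ereal (2 * r) \<le> val v (det M)"
    unfolding det_2 mult_2 using val_mult_ge[OF diag] off_diag by (intro val_diff_ge) simp_all
  have "mtrace M ^ 2 - 4 * det M = (M $ 1 $ 1 - M $ 2 $ 2) * (M $ 1 $ 1 - M $ 2 $ 2) + 4 * (M $ 1 $ 2 * M $ 2 $ 1)"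
    by (simp add: mtrace_def det_2 power2_eq_square algebra_simps)
  moreover have "ereal (2 * r) \<le> val v (4 * (M $ 1 $ 2 * M $ 2 $ 1))"
    by (rule order_trans[OF off_diag four])
  ultimately show "ereal (2 * r) \<le> val v (mtrace M ^ 2 - 4 * det M)"
    using diag_sq by (simp add: val_add_ge)
qed

lemma MP_filt_trace_det:
  fixes g B :: "'a^2^2"
  assumes "det B \<noteq> 0" "g \<in> MP_filt v B a1 a2 r"
  shows "ereal r \<le> val v (mtrace (g - mat 1))" "ereal (2 * r) \<le> val v (det (g - mat 1))"
    "ereal (2 * r) \<le> val v (mtrace (g - mat 1) ^ 2 - 4 * det (g - mat 1))"
proof -
  obtain B' where B': "B ** B' = mat 1" "B' ** B = mat 1"
    using assms(1) invertible_det_nz[of B] unfolding invertible_def by blast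
  define M where "M = B' ** (g - mat 1) ** B"
  have "(g - mat 1) ** B = B ** M"
    using B'(1) by (simp add: M_def matrix_mul_assoc)
  then have "mp_lattice a1 a2 r M"
    by (rule mp_lattice_of_MP_filt[OF assms(2)])
  note bounds = mp_lattice_trace_det[OF this]
  have "mtrace M = mtrace (g - mat 1)" "det M = det (g - mat 1)"
    unfolding M_def by (rule mtrace_det_conj[OF B'])+
  then show "ereal r \<le> val v (mtrace (g - mat 1))" "ereal (2 * r) \<le> val v (det (g - mat 1))"
    "ereal (2 * r) \<le> val v (mtrace (g - mat 1) ^ 2 - 4 * det (g - mat 1))"
    using bounds by simp_all
qed

lemma discr_bound_of_MP_filt:
  fixes g B :: "'a^2^2"
  assumes "val v (det g) = 0" "0 < r" "det B \<noteq> 0" "mat z ** g \<in> MP_filt v B a1 a2 r"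
  shows "ereal (2 * r) \<le> val v (discr g)"
proof -
  define h where "h = mat z ** g - mat 1"
  note trace_det = MP_filt_trace_det[OF assms(3,4), folded h_def]
  have "z\<^sup>2 * det g = 1 + (det h + mtrace h)"
    unfolding h_def by (rule det_scale_shift)
  moreover have "0 < val v (det h + mtrace h)"
  proof (rule order.strict_trans2)
    show "0 < ereal r"
      using assms(2) by simp
    have "ereal r \<le> val v (det h)"
      using assms(2) trace_det(2) by (simp add: order_trans[of _ "ereal (2 * r)"])
    then show "ereal r \<le> val v (det h + mtrace h)"
      using trace_det(1) by (rule val_add_ge)
  qed
  ultimately have "val v (z\<^sup>2 * det g) = 0"
    using val_add_strict[of 1 "det h + mtrace h"] by simp
  then have "val v (z\<^sup>2) = 0"
    using assms(1) by (simp add: val_mult)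
  moreover have "mtrace h ^ 2 - 4 * det h = z\<^sup>2 * discr g"
    unfolding h_def by (rule discr_scale_shift)
  ultimately have "val v (mtrace h ^ 2 - 4 * det h) = val v (discr g)"
    by (simp only: val_mult) simp
  then show ?thesis
    using trace_det(3) by simp
qed

text \<open>The point of the building is the apartment of a basis adapted to \<open>g - 1\<close>: the basis
  in which \<open>g - 1\<close> is anti-diagonal if its lower left entry is nonzero, and the standard one
  otherwise.\<close>
lemma MP_filt_of_traceless:
  fixes g :: "'a^2^2" and r :: real
  assumes g: "det g \<noteq> 0" and traceless: "mtrace (g - mat 1) = 0" and r: "0 < r"
    and det: "det (g - mat 1) \<noteq> 0" "v (det (g - mat 1)) = 2 * r"
  shows "\<exists>B a1 a2. det B \<noteq> 0 \<and> g \<in> MP_filt v B a1 a2 r"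
proof -
  define h where "h = g - mat 1"
  define \<alpha> \<beta> \<gamma> where "\<alpha> = h $ 1 $ 1" and "\<beta> = h $ 1 $ 2" and "\<gamma> = h $ 2 $ 1"
  define D where "D = \<alpha>\<^sup>2 + \<beta> * \<gamma>"
  have h22: "h $ 2 $ 2 = - \<alpha>"
    using traceless by (simp add: h_def[symmetric] mtrace_def \<alpha>_def eq_neg_iff_add_eq_0 add.commute)
  then have "D = - det h"
    by (simp add: D_def det_2 \<alpha>_def \<beta>_def \<gamma>_def power2_eq_square)
  then have D: "D \<noteq> 0" "v D = 2 * r"
    using det by (simp_all add: h_def)
  show ?thesis
  proof (cases "\<gamma> = 0")
    case False
    define B :: "'a^2^2" where "B = (\<chi> i j. if i = j then 1 else if i = 1 then \<alpha> / \<gamma> else 0)"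
    define M :: "'a^2^2" where "M = (\<chi> i j. if i = j then 0 else if i = 1 then D / \<gamma> else \<gamma>)"
    have "det B \<noteq> 0"
      by (simp add: B_def det_2)
    have "h ** B = B ** M"
      using False h22
      by (simp add: vec_eq_iff forall_2 matrix_mult_2_entry B_def M_def D_def \<alpha>_def \<beta>_def \<gamma>_def
          field_simps power2_eq_square)
    moreover have "v (D / \<gamma>) = 2 * r - v \<gamma>"
      using D False v_mult[of "D / \<gamma>" \<gamma>] by simp
    then have "mp_lattice 0 (v (D / \<gamma>) - r) r M"
      using D False by (simp add: mp_lattice_def M_def val_def)
    ultimately have "g \<in> MP_filt v B 0 (v (D / \<gamma>) - r) r"
      using \<open>det B \<noteq> 0\<close> g r by (intro MP_filt_of_mp_lattice) (simp_all add: h_def)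
    then show ?thesis
      using \<open>det B \<noteq> 0\<close> by blast
  next
    case True
    then have "\<alpha> \<noteq> 0" "2 * v \<alpha> = 2 * r"
      using D v_power[of \<alpha> 2] by (auto simp: D_def)
    then have "mp_lattice (r + \<bar>v \<beta>\<bar>) 0 r h"
      using True h22 by (auto simp: mp_lattice_def val_def \<alpha>_def[symmetric] \<beta>_def[symmetric] \<gamma>_def[symmetric])
    then have "g \<in> MP_filt v (mat 1) (r + \<bar>v \<beta>\<bar>) 0 r"
      using r g by (intro MP_filt_of_mp_lattice[where M = h]) (simp_all add: h_def)
    moreover have "det (mat 1 :: 'a^2^2) \<noteq> 0"
      by simp
    ultimately show ?thesis
      by blast
  qed
qed

lemma MP_filt_witness:
  fixes g :: "'a^2^2"
  assumes g: "g \<in> GL2_O v" and two: "val v (2::'a) = 0"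
    and disc: "discr g \<noteq> 0" "0 < val v (discr g)"
  shows "\<exists>z B a1 a2. z \<noteq> 0 \<and> det B \<noteq> 0 \<and> mat z ** g \<in> MP_filt v B a1 a2 (v (discr g) / 2)"
proof -
  define s where "s = mtrace g"
  have d: "val v (det g) = 0" "det g \<noteq> 0"
    using g by (auto simp: GL2_O_def)
  have four: "val v (4::'a) = 0"
    using two val_mult[of "2::'a" 2] by simp
  have "val v (4 * det g) = 0"
    using four d by (simp add: val_mult)
  then have "val v (s * s) = 0"
    using val_add_strict[of "4 * det g" "discr g"] disc(2) by (simp add: s_def discr_def power2_eq_square)
  then have s: "val v s = 0" "s \<noteq> 0"
    using g val_mult_unit_iff[of s s] by (auto simp: s_def mtrace_def GL2_O_def)
  define z where "z = 2 / s"
  have z: "z \<noteq> 0" "val v z = 0" "z * s = 2"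
    using two s by (auto simp: z_def val_divide_unit)
  define h where "h = mat z ** g - mat 1"
  have "mtrace h = 0"
    unfolding h_def mtrace_def scale_shift_entry using z(3) by (simp add: s_def mtrace_def algebra_simps)
  then have "4 * - det h = z\<^sup>2 * discr g"
    using discr_scale_shift[of z g] by (simp add: h_def)
  then have "val v (det h) = val v (discr g)"
    using four z(2) val_mult[of 4 "- det h"] val_mult[of "z\<^sup>2" "discr g"] by (simp add: val_power_unit)
  then have "det h \<noteq> 0" "v (det h) = 2 * (v (discr g) / 2)"
    using disc(1) by (auto simp: val_def split: if_splits)
  moreover have "det (mat z :: 'a^2^2) = z * z"
    by (simp add: det_2 mat_entry)
  then have "det (mat z ** g) \<noteq> 0"
    using z d by (simp only: det_mul) simp
  moreover have "0 < real_of_int (v (discr g)) / 2"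
    using disc by (simp add: val_def)
  ultimately show ?thesis
    using MP_filt_of_traceless[of "mat z ** g"] \<open>mtrace h = 0\<close> z(1) by (auto simp: h_def)
qed

lemma GL2_O_mult:
  assumes "g \<in> GL2_O v" "h \<in> GL2_O v"
  shows "g ** h \<in> GL2_O v"
proof -
  have "(g ** h) $ i $ j \<in> \<O>" for i j
    using assms unfolding GL2_O_def matrix_mult_2_entry by blast
  moreover have "val v (det (g ** h)) = 0"
    using assms by (simp add: GL2_O_def det_mul val_mult)
  ultimately show ?thesis
    by (auto simp: GL2_O_def)
qed

lemma mpow_GL2_O: "g \<in> GL2_O v \<Longrightarrow> mpow g n \<in> GL2_O v"
proof (induction n)
  case 0
  have "(mat 1 :: 'a^2^2) $ i $ j \<in> \<O>" for i j
    by (simp add: mat_entry)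
  then show ?case
    by (simp add: GL2_O_def)
qed (simp add: mpow_Suc GL2_O_mult)

lemma v_discr_mpow:
  assumes "val v (lucas_U (mtrace g) (det g) n) = 0" and "discr g \<noteq> 0"
  shows "discr (mpow g n) \<noteq> 0" "v (discr (mpow g n)) = v (discr g)"
proof -
  have "val v (discr (mpow g n)) = val v (discr g)"
    using assms(1) by (simp add: discr_mpow val_mult val_power_unit)
  then show "discr (mpow g n) \<noteq> 0" "v (discr (mpow g n)) = v (discr g)"
    using assms(2) by (auto simp: val_def split: if_splits)
qed

lemma discr_integer:
  assumes "g \<in> GL2_O v"
  shows "discr g \<in> \<O>"
proof -
  have "g $ i $ j \<in> \<O>" "det g \<in> \<O>" for i j
    using assms by (auto simp: GL2_O_def integers_iff)
  then show ?thesis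
    unfolding discr_def mtrace_def by (intro integers_diff integers_mult integers_power integers_add) simp_all
qed

text \<open>The bound \<open>c\<close> is needed: \<open>Sup\<close> of an unbounded set of reals is unspecified.\<close>
lemma depth_bounds:
  assumes "0 \<le> c"
    and bound: "\<And>r B a1 a2. 0 < r \<Longrightarrow> det B \<noteq> 0 \<Longrightarrow> g \<in> MP_filt v B a1 a2 r \<Longrightarrow> r \<le> c"
  shows "0 \<le> depth v g" "depth v g \<le> c"
    and "0 \<le> r \<Longrightarrow> det B \<noteq> 0 \<Longrightarrow> g \<in> MP_filt v B a1 a2 r \<Longrightarrow> r \<le> depth v g"
proof -
  define S where "S = insert 0 {r. 0 \<le> r \<and> (\<exists>B a1 a2. det B \<noteq> 0 \<and> g \<in> MP_filt v B a1 a2 r)}"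
  have depth: "depth v g = Sup S"
    by (simp add: depth_def S_def)
  have S_le: "r \<le> c" if "r \<in> S" for r
  proof (cases "r = 0")
    case False
    with that obtain B a1 a2 where "0 < r" "det B \<noteq> 0" "g \<in> MP_filt v B a1 a2 r"
      by (auto simp: S_def)
    then show ?thesis
      by (rule bound)
  qed (use \<open>0 \<le> c\<close> in simp)
  then have bdd: "bdd_above S"
    by (auto simp: bdd_above_def)
  show "0 \<le> depth v g"
    unfolding depth by (rule cSup_upper[OF _ bdd]) (simp add: S_def)
  show "r \<le> depth v g" if "0 \<le> r" "det B \<noteq> 0" "g \<in> MP_filt v B a1 a2 r"
    unfolding depth by (rule cSup_upper[OF _ bdd]) (use that in \<open>auto simp: S_def\<close>)
  show "depth v g \<le> c"
    unfolding depth by (rule cSup_least) (auto simp: S_def S_le)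
qed

lemma max_depth_eq:
  fixes g :: "'a^2^2"
  assumes g: "g \<in> GL2_O v" and two: "val v (2::'a) = 0" and disc: "discr g \<noteq> 0"
  shows "max_depth v g = v (discr g) / 2"
proof -
  define c where "c = real_of_int (v (discr g)) / 2"
  have "0 \<le> val v (discr g)"
    using discr_integer[OF g] by (simp add: integers_iff)
  then have c: "0 \<le> c"
    using disc by (simp add: c_def val_def)
  have bound: "r \<le> c" if "0 < r" "det B \<noteq> 0" "mat z ** g \<in> MP_filt v B a1 a2 r" for z r B a1 a2
  proof -
    have "ereal (2 * r) \<le> val v (discr g)"
      using g that by (intro discr_bound_of_MP_filt) (auto simp: GL2_O_def)
    then show ?thesis
      using disc by (simp add: c_def val_def)
  qed
  have depth: "0 \<le> depth v (mat z ** g)" "depth v (mat z ** g) \<le> c" for z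
    by (rule depth_bounds[OF c], rule bound, assumption+)+
  have "\<exists>z. z \<noteq> 0 \<and> depth v (mat z ** g) = c"
  proof (cases "0 < val v (discr g)")
    case True
    then obtain z B a1 a2 where "z \<noteq> 0" "det B \<noteq> 0" "mat z ** g \<in> MP_filt v B a1 a2 c"
      using MP_filt_witness[OF g two disc] by (auto simp: c_def)
    then have "c \<le> depth v (mat z ** g)"
      using c by (intro depth_bounds(3)[OF c bound])
    then show ?thesis
      using depth(2)[of z] \<open>z \<noteq> 0\<close> by (intro exI[of _ z]) simp
  next
    case False
    then have "c = 0"
      using \<open>0 \<le> val v (discr g)\<close> disc by (simp add: c_def val_def)
    then show ?thesis
      using depth[of 1] by (intro exI[of _ 1]) simp
  qed
  then have "Sup {depth v (mat z ** g) | z. z \<noteq> 0} = c"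
    using depth(2) by (intro cSup_eq_maximum) auto
  then show ?thesis
    by (simp add: max_depth_def c_def)
qed

lemma weyl_disc_eq:
  assumes "g \<in> GL2_O v" "discr g \<noteq> 0"
  shows "weyl_disc v q g = real q powr (- v (discr g))"
proof -
  have "det g \<noteq> 0" "v (det g) = 0"
    using assms(1) by (auto simp: GL2_O_def val_def split: if_splits)
  then have "v (discr g / det g) = v (discr g)"
    using assms(2) v_mult[of "discr g / det g" "det g"] by simp
  then show ?thesis
    using assms(2) \<open>det g \<noteq> 0\<close> by (simp add: weyl_disc_def absv_def discr_def[symmetric])
qed

end

lemma (in discrete_valuation) val_two_of_padic_field:
  assumes "padic_field v p q" "p \<noteq> 2"
  shows "val v (2::'a) = 0"
proof -
  have "prime p" "0 < val v (of_nat p :: 'a)"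
    using assms(1) by (simp_all add: padic_field_def)
  then have "coprime 2 p"
    using assms(2) by (intro primes_coprime) auto
  then show ?thesis
    using val_of_nat_coprime[of 2 p] \<open>0 < val v (of_nat p)\<close> by simp
qed

theorem lemma3p13:
  fixes v :: "'a::field \<Rightarrow> int" and p q n :: nat and K :: "('a^2^2) set" and \<gamma> :: "'a^2^2"
  assumes "padic_field v p q"
    and "p \<noteq> 2"
    and "coprime n ((q - 1) * q * (q + 1))"
    and "K = GL2_O v \<or> K = Iwahori v"
    and "\<gamma> \<in> K"
    and "regular_semisimple \<gamma>"
  shows "max_depth v \<gamma> = max_depth v (mpow \<gamma> n) \<and> weyl_disc v q \<gamma> = weyl_disc v q (mpow \<gamma> n)"
proof -
  interpret discrete_valuation v
    using assms(1) by unfold_locales (auto simp: padic_field_def)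
  obtain R where "residue_system v R" "card R = q"
    using assms(1) residue_system_exists by (auto simp: padic_field_def)
  then interpret residue_system v R
    by simp
  have two: "val v (2::'a) = 0"
    using assms(1,2) by (rule val_two_of_padic_field)
  have \<gamma>: "\<gamma> \<in> GL2_O v" "discr \<gamma> \<noteq> 0"
    using assms(4-6) by (auto simp: Iwahori_def regular_semisimple_def discr_def)
  then have "mtrace \<gamma> \<in> \<O>" "val v (det \<gamma>) = 0"
    by (auto simp: GL2_O_def mtrace_def)
  then have "val v (lucas_U (mtrace \<gamma>) (det \<gamma>) n) = 0"
    using two assms(3) \<open>card R = q\<close> by (intro lucas_U_unit) simp_all
  then have "discr (mpow \<gamma> n) \<noteq> 0" "v (discr (mpow \<gamma> n)) = v (discr \<gamma>)"
    using \<gamma>(2) by (rule v_discr_mpow)+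
  moreover have "mpow \<gamma> n \<in> GL2_O v"
    using \<gamma>(1) by (rule mpow_GL2_O)
  ultimately show ?thesis
    using \<gamma> two by (simp add: max_depth_eq weyl_disc_eq)
qed

end
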